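(* Let $K$ be a field, $1\le n\le d$, $X=\{x_1,\dots,x_n\}$, and let $A=\{a_1^{(d_1)},\dots,a_m^{(d_m)}\}\subset K$ be a multiset ($a_i$ repeated $d_i$ times, $a_i$ pairwise distinct) with $d_1+\cdots+d_m=d$. Let $f=\prod_{i=1}^m(x-a_i)^{d_i}=x^d+f_{d-1}x^{d-1}+\cdots+f_0$ and $G=\{g_1,\dots,g_n\}$ with $g_i(x_1,\dots,x_i)=\sum_{k=i-1}^d f_k\,h^{(i)}_{k-i+1}$ ($f_d=1$). Then: (1) the ideal $(G)\subset K[X]$ is symmetric, i.e. if $g(X)\in (G)$ then $g(x_{\sigma(1)},\dots,x_{\sigma(n)})\in (G)$ for every permutation $\sigma$ of $\{1,\dots,n\}$; (2) for every symmetric polynomial $h\in K[X]$, the normal form $r_G(h)$ of $h$ modulo $G$ with respect to the lexicographic order with $x_1\prec\cdots\prec x_n$ is a symmetric polynomial of degree $\le d-n$ in each variable.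
   Context: $h^{(i)}_j=\sum_{k_1+\cdots+k_i=j}x_1^{k_1}\cdots x_i^{k_i}$ is the complete homogeneous symmetric polynomial of degree $j$ in $x_1,\dots,x_i$. Since each $g_i$ has leading term $x_i^{d-i+1}$ for the lexicographic order, $G$ is a Gröbner basis of $(G)$ and $r_G(h)$ is well defined. *)

theory Defs
  imports "HOL-Library.Poly_Mapping" "HOL-Library.Multiset"
          "HOL-Computational_Algebra.Polynomial" "HOL-Combinatorics.Permutations"
begin

text \<open>Multivariate polynomials: maps from monomials (exponent vectors nat =>0 nat,
  variable x_i has index i) to coefficients.\<close>
type_synonym 'a mpoly = "(nat \<Rightarrow>\<^sub>0 nat) \<Rightarrow>\<^sub>0 'a"

definition in_KX :: "nat \<Rightarrow> 'a::zero mpoly \<Rightarrow> bool" where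
  "in_KX n p \<longleftrightarrow> (\<forall>t\<in>Poly_Mapping.keys p. Poly_Mapping.keys t \<subseteq> {1..n})"

definition mconst :: "'a::zero \<Rightarrow> 'a mpoly" where
  "mconst c = Poly_Mapping.single 0 c"

definition hcomp :: "nat \<Rightarrow> nat \<Rightarrow> 'a::comm_ring_1 mpoly" where
  "hcomp i j = (\<Sum>t\<in>{t::nat \<Rightarrow>\<^sub>0 nat. Poly_Mapping.keys t \<subseteq> {1..i} \<and> (\<Sum>k\<in>{1..i}. Poly_Mapping.lookup t k) = j}.
                  Poly_Mapping.single t 1)"

definition fpoly :: "'a::field multiset \<Rightarrow> 'a poly" where
  "fpoly A = (\<Prod>a\<in>#A. [:-a, 1:])"

definition gpoly :: "'a::field multiset \<Rightarrow> nat \<Rightarrow> 'a mpoly" where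
  "gpoly A i = (\<Sum>k\<in>{i-1..size A}. mconst (coeff (fpoly A) k) * hcomp i (k - (i - 1)))"

definition gen_ideal :: "nat \<Rightarrow> (nat \<Rightarrow> 'a::comm_ring_1 mpoly) \<Rightarrow> 'a mpoly set" where
  "gen_ideal n g = {p. \<exists>q. (\<forall>i\<in>{1..n}. in_KX n (q i)) \<and> p = (\<Sum>i=1..n. q i * g i)}"

definition perm_poly :: "(nat \<Rightarrow> nat) \<Rightarrow> 'a::comm_ring_1 mpoly \<Rightarrow> 'a mpoly" where
  "perm_poly \<sigma> p = (\<Sum>t\<in>Poly_Mapping.keys p.
      Poly_Mapping.single (\<Sum>i\<in>Poly_Mapping.keys t. Poly_Mapping.single (\<sigma> i) (Poly_Mapping.lookup t i)) (Poly_Mapping.lookup p t))"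

definition symmetric_poly :: "nat \<Rightarrow> 'a::comm_ring_1 mpoly \<Rightarrow> bool" where
  "symmetric_poly n p \<longleftrightarrow> (\<forall>\<sigma>. \<sigma> permutes {1..n} \<longrightarrow> perm_poly \<sigma> p = p)"

text \<open>lexicographic order with x_1 < x_2 < ... (higher-index variables more significant)\<close>
definition mon_lex_less :: "(nat \<Rightarrow>\<^sub>0 nat) \<Rightarrow> (nat \<Rightarrow>\<^sub>0 nat) \<Rightarrow> bool" where
  "mon_lex_less s t \<longleftrightarrow> (\<exists>k. Poly_Mapping.lookup s k < Poly_Mapping.lookup t k \<and> (\<forall>j>k. Poly_Mapping.lookup s j = Poly_Mapping.lookup t j))"

definition lead_mon :: "'a::zero mpoly \<Rightarrow> (nat \<Rightarrow>\<^sub>0 nat)" where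
  "lead_mon p = (THE t. t \<in> Poly_Mapping.keys p \<and> (\<forall>s\<in>Poly_Mapping.keys p. s \<noteq> t \<longrightarrow> mon_lex_less s t))"

definition mon_dvd :: "(nat \<Rightarrow>\<^sub>0 nat) \<Rightarrow> (nat \<Rightarrow>\<^sub>0 nat) \<Rightarrow> bool" where
  "mon_dvd s t \<longleftrightarrow> (\<forall>i. Poly_Mapping.lookup s i \<le> Poly_Mapping.lookup t i)"

definition normal_form :: "nat \<Rightarrow> (nat \<Rightarrow> 'a::comm_ring_1 mpoly) \<Rightarrow> 'a mpoly \<Rightarrow> 'a mpoly" where
  "normal_form n g h = (THE r. in_KX n r \<and> h - r \<in> gen_ideal n g \<and>
      (\<forall>t\<in>Poly_Mapping.keys r. \<forall>i\<in>{1..n}. \<not> mon_dvd (lead_mon (g i)) t))"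

end

theory Submission
  imports Defs
begin

text \<open>
  Let \<open>I = (g\<^sub>1, \<dots>, g\<^sub>n)\<close>, \<open>s\<^sub>k\<close> the transposition of \<open>x\<^sub>k\<close> and \<open>x\<^sub>k\<^sub>+\<^sub>1\<close>, and
  \<open>\<partial>\<^sub>k p = (p - s\<^sub>k p) / (x\<^sub>k - x\<^sub>k\<^sub>+\<^sub>1)\<close> the divided difference. The recursion
  \<open>h\<^sup>(\<^sup>i\<^sup>+\<^sup>1\<^sup>)\<^sub>m\<^sub>+\<^sub>1 = h\<^sup>(\<^sup>i\<^sup>)\<^sub>m\<^sub>+\<^sub>1 + x\<^sub>i\<^sub>+\<^sub>1 h\<^sup>(\<^sup>i\<^sup>+\<^sup>1\<^sup>)\<^sub>m\<close> gives \<open>\<partial>\<^sub>k g\<^sub>k = g\<^sub>k\<^sub>+\<^sub>1\<close>, while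
  \<open>s\<^sub>k g\<^sub>i = g\<^sub>i\<close> for \<open>i \<noteq> k\<close>; with the twisted Leibniz rule
  \<open>\<partial>\<^sub>k (q g) = \<partial>\<^sub>k q \<cdot> g + s\<^sub>k q \<cdot> \<partial>\<^sub>k g\<close> this shows \<open>\<partial>\<^sub>k I \<subseteq> I\<close>, hence
  \<open>s\<^sub>k I \<subseteq> I\<close> as \<open>s\<^sub>k = 1 - (x\<^sub>k - x\<^sub>k\<^sub>+\<^sub>1) \<partial>\<^sub>k\<close>, and adjacent transpositions generate all
  permutations.

  The leading monomial of \<open>g\<^sub>i\<close> is \<open>x\<^sub>i\<^sup>d\<^sup>-\<^sup>i\<^sup>+\<^sup>1\<close>, so the normal form is the unique \<open>r\<close>
  with \<open>h - r \<in> I\<close> whose \<open>x\<^sub>i\<close>-degree is at most \<open>d - i\<close> for every \<open>i\<close>. It is computed by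
  dividing by \<open>g\<^sub>n, \<dots>, g\<^sub>1\<close> in turn, each \<open>g\<^sub>i\<close> being monic in \<open>x\<^sub>i\<close>; the same linear map
  kills \<open>I\<close>, so a reduced element of \<open>I\<close> is zero. If \<open>h\<close> is symmetric, then
  \<open>\<partial>\<^sub>k r = -\<partial>\<^sub>k (h - r)\<close> lies in \<open>I\<close> and is again reduced, so \<open>s\<^sub>k r = r\<close>. Finally the
  bound \<open>d - n\<close> on the \<open>x\<^sub>n\<close>-degree of \<open>r\<close> spreads to all variables by symmetry.
\<close>

section \<open>Monomials, variables and linear extension\<close>

abbreviation mmonom :: "(nat \<Rightarrow>\<^sub>0 nat) \<Rightarrow> 'a::comm_ring_1 mpoly" where
  "mmonom t \<equiv> Poly_Mapping.single t 1"

definition mvar :: "nat \<Rightarrow> 'a::comm_ring_1 mpoly" where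
  "mvar i = mmonom (Poly_Mapping.single i 1)"

lemma mmonom_add: "mmonom (s + t) = (mmonom s * mmonom t :: 'a::comm_ring_1 mpoly)"
  by (simp add: mult_single)

lemma mmonom_zero: "mmonom 0 = (1 :: 'a::comm_ring_1 mpoly)"
  by (simp add: one_poly_mapping.abs_eq single.abs_eq)

lemma mvar_power: "mvar i ^ a = (mmonom (Poly_Mapping.single i a) :: 'a::comm_ring_1 mpoly)"
  by (induction a) (auto simp: mvar_def mmonom_zero mmonom_add[symmetric] single_add[symmetric])

lemma mconst_mult_single: "mconst c * Poly_Mapping.single t b = Poly_Mapping.single t (c * b)"
  by (simp add: mconst_def mult_single)

lemma mconst_mult: "mconst a * mconst b = mconst (a * b)"
  by (simp add: mconst_def mult_single)

lemma mconst_1 [simp]: "mconst 1 = 1"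
  by (simp add: mconst_def mmonom_zero)

lemma mconst_0 [simp]: "mconst 0 = 0"
  by (simp add: mconst_def)

lemma mconst_add: "mconst (a + b) = mconst a + mconst b"
  by (simp add: mconst_def single_add)

lemma mconst_uminus: "mconst (- a) = - mconst a"
  by (simp add: mconst_def single_uminus)

lemma lookup_mconst_mult: "Poly_Mapping.lookup (mconst c * p) t = c * Poly_Mapping.lookup p t"
  by (simp add: mconst_def mult_map_scale_conv_mult[symmetric] Poly_Mapping.map.rep_eq when_def)

lemma keys_mconst_mult: "Poly_Mapping.keys (mconst c * p) \<subseteq> Poly_Mapping.keys p"
  by (auto simp: in_keys_iff lookup_mconst_mult)

lemma poly_mapping_sum_single:
  "(p :: 'b \<Rightarrow>\<^sub>0 'c::comm_monoid_add) =
     (\<Sum>t\<in>Poly_Mapping.keys p. Poly_Mapping.single t (Poly_Mapping.lookup p t))"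
  by (rule poly_mapping_eqI) (simp add: lookup_sum lookup_single when_def in_keys_iff)

lemma lookup_eq_zero_outside_keys:
  "Poly_Mapping.keys t \<subseteq> S \<Longrightarrow> k \<notin> S \<Longrightarrow> Poly_Mapping.lookup t k = 0"
  by (meson in_keys_iff subsetD)

lemma keys_add_monom:
  "Poly_Mapping.keys ((s :: nat \<Rightarrow>\<^sub>0 nat) + t) = Poly_Mapping.keys s \<union> Poly_Mapping.keys t"
  by (auto simp: in_keys_iff lookup_add)

definition lin_ext :: "((nat \<Rightarrow>\<^sub>0 nat) \<Rightarrow> 'a::comm_ring_1 mpoly) \<Rightarrow> 'a mpoly \<Rightarrow> 'a mpoly" where
  "lin_ext \<phi> p = (\<Sum>t\<in>Poly_Mapping.keys p. mconst (Poly_Mapping.lookup p t) * \<phi> t)"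

lemma lin_ext_superset:
  assumes "finite T" "Poly_Mapping.keys p \<subseteq> T"
  shows "lin_ext \<phi> p = (\<Sum>t\<in>T. mconst (Poly_Mapping.lookup p t) * \<phi> t)"
  unfolding lin_ext_def
  by (rule sum.mono_neutral_left) (use assms in \<open>auto simp: in_keys_iff\<close>)

lemma lin_ext_add: "lin_ext \<phi> (p + q) = lin_ext \<phi> p + lin_ext \<phi> q"
proof -
  let ?T = "Poly_Mapping.keys p \<union> Poly_Mapping.keys q"
  have "lin_ext \<phi> (p + q) = (\<Sum>t\<in>?T. mconst (Poly_Mapping.lookup (p + q) t) * \<phi> t)"
    by (rule lin_ext_superset) (auto simp: keys_add)
  also have "\<dots> = (\<Sum>t\<in>?T. mconst (Poly_Mapping.lookup p t) * \<phi> t) +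
                  (\<Sum>t\<in>?T. mconst (Poly_Mapping.lookup q t) * \<phi> t)"
    by (simp add: lookup_add mconst_add distrib_right sum.distrib)
  also have "\<dots> = lin_ext \<phi> p + lin_ext \<phi> q"
    using lin_ext_superset[of ?T p \<phi>] lin_ext_superset[of ?T q \<phi>] by auto
  finally show ?thesis .
qed

lemma lin_ext_zero [simp]: "lin_ext \<phi> 0 = 0"
  by (simp add: lin_ext_def)

lemma lin_ext_uminus: "lin_ext \<phi> (- p) = - lin_ext \<phi> p"
  by (simp add: lin_ext_def mconst_uminus sum_negf)

lemma lin_ext_diff: "lin_ext \<phi> (p - q) = lin_ext \<phi> p - lin_ext \<phi> q"
  using lin_ext_add[of \<phi> p "- q"] by (simp add: lin_ext_uminus)

lemma lin_ext_sum: "lin_ext \<phi> (\<Sum>i\<in>I. f i) = (\<Sum>i\<in>I. lin_ext \<phi> (f i))"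
  by (induction I rule: infinite_finite_induct) (auto simp: lin_ext_add)

lemma lin_ext_single: "lin_ext \<phi> (Poly_Mapping.single t c) = mconst c * \<phi> t"
  by (cases "c = 0") (auto simp: lin_ext_def)

lemma lin_ext_mmonom [simp]: "lin_ext \<phi> (mmonom t) = \<phi> t"
  by (simp add: lin_ext_single)

lemma lin_ext_mconst_mult: "lin_ext \<phi> (mconst c * p) = mconst c * lin_ext \<phi> p"
proof -
  have "lin_ext \<phi> (mconst c * p) =
      (\<Sum>t\<in>Poly_Mapping.keys p. mconst (Poly_Mapping.lookup (mconst c * p) t) * \<phi> t)"
    by (rule lin_ext_superset) (auto simp: keys_mconst_mult)
  then show ?thesis
    by (simp add: lin_ext_def lookup_mconst_mult sum_distrib_left mconst_mult[symmetric] mult.assoc)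
qed

lemma lin_ext_cong:
  "(\<And>t. t \<in> Poly_Mapping.keys p \<Longrightarrow> \<phi> t = \<psi> t) \<Longrightarrow> lin_ext \<phi> p = lin_ext \<psi> p"
  by (simp add: lin_ext_def)

lemma lin_ext_mmonom_id [simp]: "lin_ext mmonom p = p"
  by (subst (2) poly_mapping_sum_single) (simp add: lin_ext_def mconst_mult_single)

lemma lin_ext_fun_diff: "lin_ext (\<lambda>t. \<phi> t - \<psi> t) p = lin_ext \<phi> p - lin_ext \<psi> p"
  by (simp add: lin_ext_def right_diff_distrib sum_subtractf)

lemma lin_ext_fun_mult_left: "lin_ext (\<lambda>t. c * \<phi> t) p = c * lin_ext \<phi> p"
  by (simp add: lin_ext_def sum_distrib_left mult.left_commute)

lemma lin_ext_fun_mult_right: "lin_ext (\<lambda>t. \<phi> t * c) p = lin_ext \<phi> p * c"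
  by (simp add: lin_ext_def sum_distrib_right mult.assoc)

lemma lin_ext_mult_expand:
  "lin_ext \<phi> (p * q) = (\<Sum>s\<in>Poly_Mapping.keys p. \<Sum>t\<in>Poly_Mapping.keys q.
     mconst (Poly_Mapping.lookup p s * Poly_Mapping.lookup q t) * \<phi> (s + t))"
proof -
  have "p * q = (\<Sum>s\<in>Poly_Mapping.keys p. \<Sum>t\<in>Poly_Mapping.keys q.
      Poly_Mapping.single (s + t) (Poly_Mapping.lookup p s * Poly_Mapping.lookup q t))"
    by (subst poly_mapping_sum_single[of p], subst poly_mapping_sum_single[of q])
      (simp add: sum_product mult_single)
  then show ?thesis by (simp add: lin_ext_sum lin_ext_single)
qed

lemma lin_ext_mult:
  assumes "\<And>s t. \<phi> (s + t) = \<phi> s * \<phi> t"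
  shows "lin_ext \<phi> (p * q) = lin_ext \<phi> p * lin_ext \<phi> q"
  unfolding lin_ext_mult_expand assms
  by (simp add: lin_ext_def sum_product mconst_mult[symmetric] mult_ac)

lemma lin_ext_mult_right:
  assumes "\<And>t s. s \<in> Poly_Mapping.keys c \<Longrightarrow> \<phi> (t + s) = \<phi> t * mmonom s"
  shows "lin_ext \<phi> (p * c) = lin_ext \<phi> p * c"
proof -
  have "lin_ext \<phi> (p * c) = (\<Sum>t\<in>Poly_Mapping.keys p. \<Sum>s\<in>Poly_Mapping.keys c.
      (mconst (Poly_Mapping.lookup p t) * \<phi> t) * (mconst (Poly_Mapping.lookup c s) * mmonom s))"
    unfolding lin_ext_mult_expand
    by (intro sum.cong refl) (simp add: assms mconst_mult[symmetric] mult_ac)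
  also have "\<dots> = lin_ext \<phi> p * lin_ext mmonom c"
    unfolding lin_ext_def sum_product ..
  finally show ?thesis by simp
qed

lemma lin_ext_comp: "lin_ext \<phi> (lin_ext \<psi> p) = lin_ext (\<lambda>t. lin_ext \<phi> (\<psi> t)) p"
  by (simp add: lin_ext_def[of \<psi>] lin_ext_sum lin_ext_mconst_mult) (simp add: lin_ext_def)

lemma keys_lin_ext:
  "Poly_Mapping.keys (lin_ext \<phi> p) \<subseteq> (\<Union>t\<in>Poly_Mapping.keys p. Poly_Mapping.keys (\<phi> t))"
  unfolding lin_ext_def by (rule order.trans[OF keys_sum]) (use keys_mconst_mult in blast)

section \<open>Renaming variables\<close>

abbreviation adj_transp :: "nat \<Rightarrow> nat \<Rightarrow> nat" where
  "adj_transp k \<equiv> transpose k (Suc k)"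

definition perm_mon :: "(nat \<Rightarrow> nat) \<Rightarrow> (nat \<Rightarrow>\<^sub>0 nat) \<Rightarrow> (nat \<Rightarrow>\<^sub>0 nat)" where
  "perm_mon \<sigma> t = (\<Sum>i\<in>Poly_Mapping.keys t. Poly_Mapping.single (\<sigma> i) (Poly_Mapping.lookup t i))"

lemma lookup_perm_mon:
  assumes "bij \<sigma>"
  shows "Poly_Mapping.lookup (perm_mon \<sigma> t) j = Poly_Mapping.lookup t (inv \<sigma> j)"
proof -
  have "Poly_Mapping.lookup (perm_mon \<sigma> t) j =
      (\<Sum>i\<in>Poly_Mapping.keys t. if i = inv \<sigma> j then Poly_Mapping.lookup t i else 0)"
    unfolding perm_mon_def lookup_sum
    by (rule sum.cong) (auto simp: lookup_single when_def bij_inv_eq_iff[OF assms])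
  then show ?thesis
    by (simp add: sum.delta in_keys_iff)
qed

lemma perm_mon_add: "bij \<sigma> \<Longrightarrow> perm_mon \<sigma> (s + t) = perm_mon \<sigma> s + perm_mon \<sigma> t"
  by (rule poly_mapping_eqI) (simp add: lookup_perm_mon lookup_add)

lemma perm_mon_zero [simp]: "perm_mon \<sigma> 0 = 0"
  by (simp add: perm_mon_def)

lemma perm_mon_single:
  "bij \<sigma> \<Longrightarrow> perm_mon \<sigma> (Poly_Mapping.single i a) = Poly_Mapping.single (\<sigma> i) a"
  by (rule poly_mapping_eqI) (auto simp: lookup_perm_mon lookup_single when_def bij_inv_eq_iff)

lemma perm_mon_comp:
  "bij \<sigma> \<Longrightarrow> bij \<tau> \<Longrightarrow> perm_mon \<sigma> (perm_mon \<tau> t) = perm_mon (\<sigma> \<circ> \<tau>) t"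
  by (rule poly_mapping_eqI) (simp add: lookup_perm_mon bij_comp o_inv_distrib)

lemma perm_mon_fix:
  assumes "\<And>i. i \<in> Poly_Mapping.keys t \<Longrightarrow> \<sigma> i = i"
  shows "perm_mon \<sigma> t = t"
  unfolding perm_mon_def using assms by (subst (3) poly_mapping_sum_single) simp

lemma perm_mon_id [simp]: "perm_mon id t = t"
  by (rule perm_mon_fix) simp

lemma perm_mon_inj: "bij \<sigma> \<Longrightarrow> inj (perm_mon \<sigma>)"
  by (rule injI) (metis perm_mon_comp bij_imp_bij_inv inv_o_cancel bij_is_inj perm_mon_id)

lemma keys_perm_mon:
  assumes "bij \<sigma>"
  shows "Poly_Mapping.keys (perm_mon \<sigma> t) = \<sigma> ` Poly_Mapping.keys t"
proof -
  have "Poly_Mapping.keys (perm_mon \<sigma> t) = {x. inv \<sigma> x \<in> Poly_Mapping.keys t}"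
    by (auto simp: in_keys_iff lookup_perm_mon assms)
  also have "\<dots> = \<sigma> ` Poly_Mapping.keys t"
    using bij_image_Collect_eq[OF assms, of "\<lambda>x. x \<in> Poly_Mapping.keys t"] by simp
  finally show ?thesis .
qed

lemma perm_poly_eq_lin_ext: "perm_poly \<sigma> p = lin_ext (\<lambda>t. mmonom (perm_mon \<sigma> t)) p"
  by (simp add: perm_poly_def lin_ext_def perm_mon_def mconst_mult_single)

lemma perm_poly_add: "perm_poly \<sigma> (p + q) = perm_poly \<sigma> p + perm_poly \<sigma> q"
  by (simp add: perm_poly_eq_lin_ext lin_ext_add)

lemma perm_poly_sum: "perm_poly \<sigma> (\<Sum>i\<in>I. f i) = (\<Sum>i\<in>I. perm_poly \<sigma> (f i))"
  by (simp add: perm_poly_eq_lin_ext lin_ext_sum)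

lemma perm_poly_mult: "bij \<sigma> \<Longrightarrow> perm_poly \<sigma> (p * q) = perm_poly \<sigma> p * perm_poly \<sigma> q"
  unfolding perm_poly_eq_lin_ext by (rule lin_ext_mult) (simp add: perm_mon_add mmonom_add)

lemma perm_poly_mmonom: "perm_poly \<sigma> (mmonom t) = mmonom (perm_mon \<sigma> t)"
  by (simp add: perm_poly_eq_lin_ext)

lemma perm_poly_mconst_mult: "perm_poly \<sigma> (mconst c * p) = mconst c * perm_poly \<sigma> p"
  by (simp add: perm_poly_eq_lin_ext lin_ext_mconst_mult)

lemma perm_poly_mconst [simp]: "perm_poly \<sigma> (mconst c) = mconst c"
  by (simp add: perm_poly_eq_lin_ext mconst_def lin_ext_single mmonom_zero)

lemma perm_poly_mvar: "bij \<sigma> \<Longrightarrow> perm_poly \<sigma> (mvar i) = mvar (\<sigma> i)"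
  by (simp add: mvar_def perm_poly_mmonom perm_mon_single)

lemma perm_poly_comp:
  "bij \<sigma> \<Longrightarrow> bij \<tau> \<Longrightarrow> perm_poly \<sigma> (perm_poly \<tau> p) = perm_poly (\<sigma> \<circ> \<tau>) p"
  unfolding perm_poly_eq_lin_ext[of \<tau>] by (simp add: lin_ext_comp perm_mon_comp perm_poly_eq_lin_ext)

lemma perm_poly_fix:
  assumes "\<And>t i. t \<in> Poly_Mapping.keys p \<Longrightarrow> i \<in> Poly_Mapping.keys t \<Longrightarrow> \<sigma> i = i"
  shows "perm_poly \<sigma> p = p"
proof -
  have "perm_poly \<sigma> p = lin_ext mmonom p"
    unfolding perm_poly_eq_lin_ext by (rule lin_ext_cong) (simp add: perm_mon_fix assms)
  then show ?thesis by simp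
qed

lemma perm_poly_id [simp]: "perm_poly id p = p"
  by (rule perm_poly_fix) simp

lemma lookup_perm_poly_perm_mon:
  assumes "bij \<sigma>"
  shows "Poly_Mapping.lookup (perm_poly \<sigma> p) (perm_mon \<sigma> t) = Poly_Mapping.lookup p t"
proof -
  have "Poly_Mapping.lookup (perm_poly \<sigma> p) (perm_mon \<sigma> t) =
      (\<Sum>s\<in>Poly_Mapping.keys p. if s = t then Poly_Mapping.lookup p s else 0)"
    unfolding perm_poly_def perm_mon_def[symmetric] lookup_sum
    using perm_mon_inj[OF assms] by (intro sum.cong) (auto simp: lookup_single when_def inj_eq)
  then show ?thesis by (simp add: sum.delta in_keys_iff)
qed

lemma permutes_induct_adj_transp:
  assumes "\<sigma> permutes {1..n}" "P id" "\<And>\<sigma> \<tau>. P \<sigma> \<Longrightarrow> P \<tau> \<Longrightarrow> P (\<sigma> \<circ> \<tau>)"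
    and "\<And>k. 1 \<le> k \<Longrightarrow> Suc k \<le> n \<Longrightarrow> P (adj_transp k)"
  shows "P \<sigma>"
proof -
  have adj: "P (apply_adj_transps xs)" if "\<forall>x\<in>set xs. 1 \<le> x \<and> Suc x \<le> n" for xs
    using that
  proof (induction xs)
    case (Cons x xs)
    then have "P (adj_transp x)" "P (apply_adj_transps xs)" by (auto intro: assms(4))
    then show ?case unfolding apply_adj_transps_Cons Suc_eq_plus1[symmetric] by (rule assms(3))
  qed (simp add: assms(2))
  have "P (transpose a b)" if "a \<in> {1..n}" "b \<in> {1..n}" "a < b" for a b
    using adj[of "adj_transp_seq a b"] that by (simp add: adj_transp_seq_correct set_adj_transp_seq)
  then have transp: "P (transpose a b)" if "a \<in> {1..n}" "b \<in> {1..n}" "a \<noteq> b" for a b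
    using that by (metis linorder_neqE_nat transpose_commute)
  show ?thesis
    using assms(1) finite_atLeastAtMost[of 1 n]
  proof (induction rule: permutes_induct)
    case id
    show ?case by (rule assms(2))
  next
    case (swap a b p)
    then show ?case using transp assms(3) by blast
  qed
qed

section \<open>Polynomials in the first \<open>n\<close> variables and their ideals\<close>

lemma in_KX_zero [simp]: "in_KX n 0"
  by (simp add: in_KX_def)

lemma in_KX_one [simp]: "in_KX n 1"
  by (simp add: in_KX_def)

lemma in_KX_add: "in_KX n p \<Longrightarrow> in_KX n q \<Longrightarrow> in_KX n (p + q)"
  unfolding in_KX_def by (auto dest!: subsetD[OF keys_add])

lemma in_KX_uminus: "in_KX n (p :: 'a::comm_ring_1 mpoly) \<Longrightarrow> in_KX n (- p)"
  unfolding in_KX_def by simp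

lemma in_KX_diff: "in_KX n (p :: 'a::comm_ring_1 mpoly) \<Longrightarrow> in_KX n q \<Longrightarrow> in_KX n (p - q)"
  unfolding diff_conv_add_uminus by (intro in_KX_add in_KX_uminus)

lemma in_KX_mult:
  assumes "in_KX n p" "in_KX n (q :: 'a::comm_ring_1 mpoly)"
  shows "in_KX n (p * q)"
  using assms keys_mult[of p q] unfolding in_KX_def by (force simp: keys_add_monom)

lemma in_KX_sum: "(\<And>i. i \<in> I \<Longrightarrow> in_KX n (f i)) \<Longrightarrow> in_KX n (\<Sum>i\<in>I. f i)"
  by (induction I rule: infinite_finite_induct) (auto intro: in_KX_add)

lemma in_KX_mconst [simp]: "in_KX n (mconst c)"
  by (simp add: in_KX_def mconst_def)

lemma in_KX_single: "Poly_Mapping.keys t \<subseteq> {1..n} \<Longrightarrow> in_KX n (Poly_Mapping.single t c)"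
  by (simp add: in_KX_def)

lemma in_KX_mvar: "i \<in> {1..n} \<Longrightarrow> in_KX n (mvar i)"
  by (simp add: mvar_def in_KX_def)

lemma in_KX_power: "in_KX n (p :: 'a::comm_ring_1 mpoly) \<Longrightarrow> in_KX n (p ^ k)"
  by (induction k) (auto intro: in_KX_mult)

lemma in_KX_lin_ext:
  "(\<And>t. t \<in> Poly_Mapping.keys p \<Longrightarrow> in_KX n (\<phi> t)) \<Longrightarrow> in_KX n (lin_ext \<phi> p)"
  unfolding lin_ext_def by (auto intro!: in_KX_sum in_KX_mult)

lemma in_KX_perm_poly:
  assumes "\<sigma> permutes {1..n}" "in_KX n p"
  shows "in_KX n (perm_poly \<sigma> p)"
  unfolding perm_poly_eq_lin_ext
proof (rule in_KX_lin_ext, rule in_KX_single)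
  fix t assume "t \<in> Poly_Mapping.keys p"
  then have "Poly_Mapping.keys t \<subseteq> {1..n}" using assms(2) by (auto simp: in_KX_def)
  then have "\<sigma> ` Poly_Mapping.keys t \<subseteq> \<sigma> ` {1..n}" by blast
  then show "Poly_Mapping.keys (perm_mon \<sigma> t) \<subseteq> {1..n}"
    using assms(1) by (simp add: keys_perm_mon permutes_bij permutes_image)
qed

lemma gen_ideal_zero: "0 \<in> gen_ideal n (g :: nat \<Rightarrow> 'a::comm_ring_1 mpoly)"
  unfolding gen_ideal_def by (auto intro!: exI[of _ "\<lambda>i. 0"])

lemma gen_ideal_add:
  assumes "p \<in> gen_ideal n g" "q \<in> gen_ideal n g"
  shows "p + q \<in> gen_ideal n (g :: nat \<Rightarrow> 'a::comm_ring_1 mpoly)"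
proof -
  obtain u where "\<forall>i\<in>{1..n}. in_KX n (u i)" "p = (\<Sum>i = 1..n. u i * g i)"
    using assms(1) unfolding gen_ideal_def by blast
  moreover obtain v where "\<forall>i\<in>{1..n}. in_KX n (v i)" "q = (\<Sum>i = 1..n. v i * g i)"
    using assms(2) unfolding gen_ideal_def by blast
  ultimately show ?thesis
    unfolding gen_ideal_def
    by (intro CollectI exI[of _ "\<lambda>i. u i + v i"]) (auto intro: in_KX_add simp: sum.distrib distrib_right)
qed

lemma gen_ideal_mult:
  assumes "in_KX n c" "p \<in> gen_ideal n g"
  shows "c * p \<in> gen_ideal n (g :: nat \<Rightarrow> 'a::comm_ring_1 mpoly)"
proof -
  obtain u where "\<forall>i\<in>{1..n}. in_KX n (u i)" "p = (\<Sum>i = 1..n. u i * g i)"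
    using assms(2) unfolding gen_ideal_def by blast
  with assms(1) show ?thesis
    unfolding gen_ideal_def
    by (intro CollectI exI[of _ "\<lambda>i. c * u i"]) (auto intro: in_KX_mult simp: sum_distrib_left mult.assoc)
qed

lemma gen_ideal_uminus:
  assumes "p \<in> gen_ideal n g"
  shows "- p \<in> gen_ideal n (g :: nat \<Rightarrow> 'a::comm_ring_1 mpoly)"
  using gen_ideal_mult[OF in_KX_mconst assms, of "- 1"] by (simp add: mconst_uminus)

lemma gen_ideal_diff:
  "p \<in> gen_ideal n g \<Longrightarrow> q \<in> gen_ideal n g \<Longrightarrow> p - q \<in> gen_ideal n (g :: nat \<Rightarrow> 'a::comm_ring_1 mpoly)"
  using gen_ideal_add[of p n g "- q"] gen_ideal_uminus by fastforce

lemma gen_ideal_sum: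
  "(\<And>j. j \<in> J \<Longrightarrow> f j \<in> gen_ideal n g) \<Longrightarrow> (\<Sum>j\<in>J. f j) \<in> gen_ideal n (g :: nat \<Rightarrow> 'a::comm_ring_1 mpoly)"
  by (induction J rule: infinite_finite_induct) (auto intro: gen_ideal_add gen_ideal_zero)

lemma mult_gen_in_gen_ideal:
  assumes "i \<in> {1..n}" "in_KX n q"
  shows "q * g i \<in> gen_ideal n (g :: nat \<Rightarrow> 'a::comm_ring_1 mpoly)"
proof -
  have "(\<Sum>j\<in>{1..n}. (if j = i then q else 0) * g j) = q * g i"
    using assms(1) by (simp add: if_distrib[of "\<lambda>x. x * _"] sum.delta' cong: if_cong)
  with assms show ?thesis
    unfolding gen_ideal_def by (intro CollectI exI[of _ "\<lambda>j. if j = i then q else 0"]) auto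
qed

section \<open>Complete homogeneous symmetric polynomials\<close>

lemma finite_bounded_monoms:
  assumes "finite S"
  shows "finite {t :: nat \<Rightarrow>\<^sub>0 nat. Poly_Mapping.keys t \<subseteq> S \<and> (\<forall>k\<in>S. Poly_Mapping.lookup t k \<le> m)}"
    (is "finite ?T")
proof -
  have "Poly_Mapping.lookup ` ?T \<subseteq> {f. \<forall>x. (x \<in> S \<longrightarrow> f x \<in> {0..m}) \<and> (x \<notin> S \<longrightarrow> f x = 0)}"
    by (auto simp: in_keys_iff)
  then have "finite (Poly_Mapping.lookup ` ?T)"
    by (rule finite_subset) (intro finite_set_of_finite_funs assms finite_atLeastAtMost)
  moreover have "inj Poly_Mapping.lookup"
    by (rule injI) (rule poly_mapping_eqI, simp)
  ultimately show ?thesis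
    by (meson finite_imageD inj_on_subset subset_UNIV)
qed

definition homog_monoms :: "nat \<Rightarrow> nat \<Rightarrow> (nat \<Rightarrow>\<^sub>0 nat) set" where
  "homog_monoms i m = {t. Poly_Mapping.keys t \<subseteq> {1..i} \<and> (\<Sum>k\<in>{1..i}. Poly_Mapping.lookup t k) = m}"

lemma lookup_le_homog_monoms:
  assumes "t \<in> homog_monoms i m"
  shows "Poly_Mapping.lookup t j \<le> m"
proof (cases "j \<in> {1..i}")
  case True
  then show ?thesis
    using assms member_le_sum[of j "{1..i}" "Poly_Mapping.lookup t"] by (simp add: homog_monoms_def)
next
  case False
  then have "j \<notin> Poly_Mapping.keys t" using assms by (auto simp: homog_monoms_def)
  then show ?thesis by (simp add: in_keys_iff)
qed

lemma finite_homog_monoms: "finite (homog_monoms i m)"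
  by (rule finite_subset[OF _ finite_bounded_monoms[of "{1..i}" m]])
    (auto simp: lookup_le_homog_monoms homog_monoms_def)

lemma hcomp_eq_sum_homog_monoms: "hcomp i m = (\<Sum>t\<in>homog_monoms i m. mmonom t)"
  unfolding hcomp_def homog_monoms_def ..

lemma lookup_hcomp: "Poly_Mapping.lookup (hcomp i m) t = (if t \<in> homog_monoms i m then 1 else 0)"
  unfolding hcomp_eq_sum_homog_monoms lookup_sum lookup_single when_def
  by (simp add: finite_homog_monoms)

lemma keys_hcomp: "Poly_Mapping.keys (hcomp i m :: 'a::comm_ring_1 mpoly) \<subseteq> homog_monoms i m"
  by (auto simp: in_keys_iff lookup_hcomp split: if_splits)

lemma homog_monoms_0: "homog_monoms i 0 = {0}"
  by (auto simp: homog_monoms_def in_keys_iff intro!: poly_mapping_eqI)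

lemma hcomp_0: "hcomp i 0 = 1"
  by (simp add: hcomp_eq_sum_homog_monoms homog_monoms_0 mmonom_zero)

lemma homog_monoms_subset_Suc: "homog_monoms i m \<subseteq> homog_monoms (Suc i) m"
  by (auto simp: homog_monoms_def in_keys_iff)

lemma add_single_homog_monoms:
  assumes "s \<in> homog_monoms i m" "j \<in> {1..i}"
  shows "s + Poly_Mapping.single j 1 \<in> homog_monoms i (Suc m)"
  using assms by (auto simp: homog_monoms_def keys_add_monom lookup_add sum.distrib lookup_single when_def)

lemma homog_monoms_Suc_Suc:
  "homog_monoms (Suc i) (Suc m) =
     homog_monoms i (Suc m) \<union> (\<lambda>t. t + Poly_Mapping.single (Suc i) 1) ` homog_monoms (Suc i) m"
  (is "?L = ?A \<union> ?B")
proof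
  show "?L \<subseteq> ?A \<union> ?B"
  proof
    fix t assume t: "t \<in> ?L"
    show "t \<in> ?A \<union> ?B"
    proof (cases "Poly_Mapping.lookup t (Suc i) = 0")
      case True
      then have "Suc i \<notin> Poly_Mapping.keys t" by (simp add: in_keys_iff)
      then have "Poly_Mapping.keys t \<subseteq> {1..i}"
        using t by (fastforce simp: homog_monoms_def le_Suc_eq)
      then show ?thesis using t True by (simp add: homog_monoms_def)
    next
      case False
      define s where "s = t - Poly_Mapping.single (Suc i) 1"
      have lookup_s: "Poly_Mapping.lookup s k = Poly_Mapping.lookup t k - (if k = Suc i then 1 else 0)" for k
        by (simp add: s_def lookup_minus lookup_single when_def)
      have "t = s + Poly_Mapping.single (Suc i) 1"
        by (rule poly_mapping_eqI) (use False in \<open>simp add: lookup_s lookup_add lookup_single\<close>)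
      moreover have "s \<in> homog_monoms (Suc i) m"
        using t False by (auto simp: homog_monoms_def in_keys_iff lookup_s split: if_splits)
      ultimately show ?thesis by blast
    qed
  qed
  show "?A \<union> ?B \<subseteq> ?L"
    using homog_monoms_subset_Suc add_single_homog_monoms[of _ "Suc i" m "Suc i"] by auto
qed

lemma hcomp_Suc_Suc:
  "hcomp (Suc i) (Suc m) = hcomp i (Suc m) + mvar (Suc i) * (hcomp (Suc i) m :: 'a::comm_ring_1 mpoly)"
proof -
  let ?e = "Poly_Mapping.single (Suc i) (1::nat)"
  have "Poly_Mapping.lookup t (Suc i) = 0" if "t \<in> homog_monoms i (Suc m)" for t
    using that by (intro lookup_eq_zero_outside_keys[of t "{1..i}"]) (auto simp: homog_monoms_def)
  moreover have "Poly_Mapping.lookup (t + ?e) (Suc i) \<noteq> 0" for t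
    by (simp add: lookup_add)
  ultimately have disjoint: "homog_monoms i (Suc m) \<inter> (\<lambda>t. t + ?e) ` homog_monoms (Suc i) m = {}"
    by blast
  have "hcomp (Suc i) (Suc m) = hcomp i (Suc m) + (\<Sum>t\<in>(\<lambda>t. t + ?e) ` homog_monoms (Suc i) m. (mmonom t :: 'a mpoly))"
    unfolding hcomp_eq_sum_homog_monoms homog_monoms_Suc_Suc
    by (rule sum.union_disjoint[OF finite_homog_monoms finite_imageI[OF finite_homog_monoms] disjoint])
  also have "(\<Sum>t\<in>(\<lambda>t. t + ?e) ` homog_monoms (Suc i) m. (mmonom t :: 'a mpoly)) =
      (\<Sum>t\<in>homog_monoms (Suc i) m. mmonom (t + ?e))"
    by (rule sum.reindex_cong[of "\<lambda>t. t + ?e"]) (auto intro: inj_onI)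
  also have "\<dots> = mvar (Suc i) * hcomp (Suc i) m"
    by (simp add: hcomp_eq_sum_homog_monoms sum_distrib_left mmonom_add mvar_def mult.commute)
  finally show ?thesis .
qed

lemma perm_mon_homog_monoms:
  assumes "\<sigma> permutes {1..i}" "t \<in> homog_monoms i m"
  shows "perm_mon \<sigma> t \<in> homog_monoms i m"
proof -
  have bij: "bij \<sigma>" using assms(1) by (rule permutes_bij)
  have "\<sigma> ` Poly_Mapping.keys t \<subseteq> \<sigma> ` {1..i}" using assms(2) unfolding homog_monoms_def by blast
  then have "Poly_Mapping.keys (perm_mon \<sigma> t) \<subseteq> {1..i}"
    using assms(1) by (simp add: keys_perm_mon bij permutes_image)
  moreover have "(\<Sum>k\<in>{1..i}. Poly_Mapping.lookup t (inv \<sigma> k)) = (\<Sum>k\<in>{1..i}. Poly_Mapping.lookup t k)"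
    using sum.permute[OF permutes_inv[OF assms(1)], of "Poly_Mapping.lookup t"] by (simp add: comp_def)
  ultimately show ?thesis
    using assms(2) by (simp add: homog_monoms_def lookup_perm_mon bij)
qed

lemma perm_poly_hcomp:
  assumes "\<sigma> permutes {1..i}"
  shows "perm_poly \<sigma> (hcomp i m) = (hcomp i m :: 'a::comm_ring_1 mpoly)"
proof -
  have bij: "bij \<sigma>" using assms by (rule permutes_bij)
  have "perm_mon \<sigma> ` homog_monoms i m \<subseteq> homog_monoms i m"
    using perm_mon_homog_monoms[OF assms] by blast
  moreover have "homog_monoms i m \<subseteq> perm_mon \<sigma> ` homog_monoms i m"
  proof
    fix t assume "t \<in> homog_monoms i m"
    then have "perm_mon (inv \<sigma>) t \<in> homog_monoms i m"
      by (rule perm_mon_homog_monoms[OF permutes_inv[OF assms]])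
    moreover have "perm_mon \<sigma> (perm_mon (inv \<sigma>) t) = t"
      using bij by (simp add: perm_mon_comp bij_imp_bij_inv surj_iff[THEN iffD1, OF bij_is_surj])
    ultimately show "t \<in> perm_mon \<sigma> ` homog_monoms i m" by (metis image_eqI)
  qed
  ultimately have "perm_mon \<sigma> ` homog_monoms i m = homog_monoms i m" by blast
  moreover have "inj_on (perm_mon \<sigma>) (homog_monoms i m)"
    using perm_mon_inj[OF bij] by (rule inj_on_subset) simp
  then have "perm_poly \<sigma> (hcomp i m) = (\<Sum>t\<in>perm_mon \<sigma> ` homog_monoms i m. (mmonom t :: 'a mpoly))"
    by (simp add: hcomp_eq_sum_homog_monoms perm_poly_sum perm_poly_mmonom sum.reindex)
  ultimately show ?thesis
    by (simp add: hcomp_eq_sum_homog_monoms)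
qed

lemma hcomp_minus_swap:
  assumes "1 \<le> k"
  shows "hcomp k (Suc m) - perm_poly (adj_transp k) (hcomp k (Suc m)) =
         (mvar k - mvar (Suc k)) * (hcomp (Suc k) m :: 'a::comm_ring_1 mpoly)"
proof -
  let ?s = "adj_transp k"
  have s: "?s permutes {1..Suc k}" using assms by (intro permutes_swap_id) auto
  have rec: "hcomp (Suc k) (Suc m) = hcomp k (Suc m) + mvar (Suc k) * (hcomp (Suc k) m :: 'a mpoly)"
    by (rule hcomp_Suc_Suc)
  then have "perm_poly ?s (hcomp (Suc k) (Suc m)) =
      perm_poly ?s (hcomp k (Suc m)) + mvar k * (hcomp (Suc k) m :: 'a mpoly)"
    by (simp add: perm_poly_add perm_poly_mult perm_poly_mvar perm_poly_hcomp[OF s])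
  then have "hcomp (Suc k) (Suc m) = perm_poly ?s (hcomp k (Suc m)) + mvar k * (hcomp (Suc k) m :: 'a mpoly)"
    by (simp add: perm_poly_hcomp[OF s])
  with rec show ?thesis by (simp add: algebra_simps)
qed

section \<open>The generators \<open>g\<^sub>i\<close>\<close>

lemma coeff_fpoly_size: "coeff (fpoly A) (size A) = (1 :: 'a::field)"
proof -
  have "degree (fpoly A) = size A \<and> lead_coeff (fpoly A) = (1 :: 'a)"
  proof (induction A)
    case (add a A)
    have fpoly_add: "fpoly (add_mset a A) = [:-a, 1:] * fpoly A" by (simp add: fpoly_def)
    from add.IH have deg: "degree (fpoly A) = size A" and lc: "lead_coeff (fpoly A) = 1" by auto
    then have "fpoly A \<noteq> 0" by auto
    then have "degree (fpoly (add_mset a A)) = Suc (size A)"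
      unfolding fpoly_add by (simp del: mult_pCons_left add: degree_mult_eq deg)
    moreover have "lead_coeff (fpoly (add_mset a A)) = 1"
      unfolding fpoly_add lead_coeff_mult lc by simp
    ultimately show ?case by simp
  qed (simp add: fpoly_def)
  then show ?thesis by metis
qed

definition monoms_below :: "nat \<Rightarrow> nat \<Rightarrow> (nat \<Rightarrow>\<^sub>0 nat) set" where
  "monoms_below i D = {t. Poly_Mapping.keys t \<subseteq> {1..i} \<and> Poly_Mapping.lookup t i < D}"

lemma homog_monoms_eq_single:
  assumes "t \<in> homog_monoms i m" "1 \<le> i" "Poly_Mapping.lookup t i = m"
  shows "t = Poly_Mapping.single i m"
proof (rule poly_mapping_eqI)
  fix j
  have "(\<Sum>k\<in>{1..i}. Poly_Mapping.lookup t k) = Poly_Mapping.lookup t i + (\<Sum>k\<in>{1..i} - {i}. Poly_Mapping.lookup t k)"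
    using assms(2) by (subst sum.remove[of _ i]) auto
  then have "\<forall>k\<in>{1..i} - {i}. Poly_Mapping.lookup t k = 0"
    using assms by (simp add: homog_monoms_def)
  moreover have "Poly_Mapping.keys t \<subseteq> {1..i}"
    using assms(1) by (simp add: homog_monoms_def)
  ultimately show "Poly_Mapping.lookup t j = Poly_Mapping.lookup (Poly_Mapping.single i m) j"
    using assms(2,3) lookup_eq_zero_outside_keys[of t "{1..i}" j]
    by (cases "j \<in> {1..i}"; cases "j = i") (auto simp: lookup_single)
qed

lemma perm_poly_gpoly:
  assumes "\<sigma> permutes {1..i}"
  shows "perm_poly \<sigma> (gpoly A i) = gpoly A i"
  by (simp add: gpoly_def perm_poly_sum perm_poly_mconst_mult perm_poly_hcomp[OF assms])

context
  fixes A :: "'a::field multiset" and d :: nat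
  assumes size_A: "size A = d"
begin

lemma gpoly_minus_lead_eq:
  assumes "1 \<le> i" "i \<le> d"
  shows "gpoly A i - mmonom (Poly_Mapping.single i (d - i + 1)) =
    (\<Sum>k\<in>{i - 1..<d}. mconst (coeff (fpoly A) k) * hcomp i (k - (i - 1))) +
    (\<Sum>t\<in>homog_monoms i (d - i + 1) - {Poly_Mapping.single i (d - i + 1)}. mmonom t)"
proof -
  have "{i - 1..d} = insert d {i - 1..<d}" using assms by auto
  then have "gpoly A i = hcomp i (d - i + 1) +
      (\<Sum>k\<in>{i - 1..<d}. mconst (coeff (fpoly A) k) * hcomp i (k - (i - 1)))"
    using coeff_fpoly_size[of A] assms by (simp add: gpoly_def size_A Suc_diff_le)
  moreover have "Poly_Mapping.single i (d - i + 1) \<in> homog_monoms i (d - i + 1)"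
    using assms by (simp add: homog_monoms_def lookup_single when_def)
  then have "hcomp i (d - i + 1) = mmonom (Poly_Mapping.single i (d - i + 1)) +
      (\<Sum>t\<in>homog_monoms i (d - i + 1) - {Poly_Mapping.single i (d - i + 1)}. (mmonom t :: 'a mpoly))"
    unfolding hcomp_eq_sum_homog_monoms by (simp add: sum.remove finite_homog_monoms)
  ultimately show ?thesis by (simp add: algebra_simps)
qed

lemma keys_gpoly_minus_lead:
  assumes "1 \<le> i" "i \<le> d"
  shows "Poly_Mapping.keys (gpoly A i - mmonom (Poly_Mapping.single i (d - i + 1))) \<subseteq> monoms_below i (d - i + 1)"
proof -
  have "Poly_Mapping.keys (mconst (coeff (fpoly A) k) * hcomp i (k - (i - 1)) :: 'a mpoly)
      \<subseteq> monoms_below i (d - i + 1)" if "k < d" for k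
    using keys_mconst_mult keys_hcomp lookup_le_homog_monoms[of _ i "k - (i - 1)" i] that
    by (fastforce simp: monoms_below_def homog_monoms_def)
  moreover have "Poly_Mapping.keys (mmonom t :: 'a mpoly) \<subseteq> monoms_below i (d - i + 1)"
    if "t \<in> homog_monoms i (d - i + 1) - {Poly_Mapping.single i (d - i + 1)}" for t
    using that lookup_le_homog_monoms[of t i "d - i + 1" i] homog_monoms_eq_single[of t i] assms
    by (fastforce simp: monoms_below_def homog_monoms_def)
  ultimately show ?thesis
    unfolding gpoly_minus_lead_eq[OF assms]
    by (intro order.trans[OF keys_add] Un_least order.trans[OF keys_sum] UN_least) auto
qed

lemma keys_gpoly:
  assumes "1 \<le> i" "i \<le> d"
  shows "Poly_Mapping.keys (gpoly A i) \<subseteq> insert (Poly_Mapping.single i (d - i + 1)) (monoms_below i (d - i + 1))"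
  using keys_add[of "mmonom (Poly_Mapping.single i (d - i + 1))"
      "gpoly A i - mmonom (Poly_Mapping.single i (d - i + 1))"]
    keys_gpoly_minus_lead[OF assms]
  by auto

lemma lookup_gpoly_lead:
  assumes "1 \<le> i" "i \<le> d"
  shows "Poly_Mapping.lookup (gpoly A i) (Poly_Mapping.single i (d - i + 1)) = 1"
proof -
  have "Poly_Mapping.single i (d - i + 1) \<notin> monoms_below i (d - i + 1)"
    by (simp add: monoms_below_def)
  then have "Poly_Mapping.lookup (gpoly A i - mmonom (Poly_Mapping.single i (d - i + 1))) (Poly_Mapping.single i (d - i + 1)) = 0"
    using keys_gpoly_minus_lead[OF assms] by (auto simp: in_keys_iff)
  then show ?thesis by (simp add: lookup_minus)
qed

lemma in_KX_gpoly:
  assumes "1 \<le> i" "i \<le> d"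
  shows "in_KX i (gpoly A i)"
  using keys_gpoly[OF assms] assms unfolding in_KX_def by (auto simp: monoms_below_def)

lemma perm_poly_gpoly_fix:
  assumes "1 \<le> i" "i \<le> d" "\<And>j. j \<in> {1..i} \<Longrightarrow> \<sigma> j = j"
  shows "perm_poly \<sigma> (gpoly A i) = gpoly A i"
proof (rule perm_poly_fix)
  fix t j assume "t \<in> Poly_Mapping.keys (gpoly A i)" "j \<in> Poly_Mapping.keys t"
  then have "j \<in> {1..i}" using in_KX_gpoly[OF assms(1,2)] unfolding in_KX_def by blast
  then show "\<sigma> j = j" by (rule assms(3))
qed

lemma gpoly_minus_swap:
  assumes "1 \<le> k" "k < d"
  shows "gpoly A k - perm_poly (adj_transp k) (gpoly A k) = (mvar k - mvar (Suc k)) * gpoly A (Suc k)"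
proof -
  let ?s = "adj_transp k" and ?c = "\<lambda>j. mconst (coeff (fpoly A) j)"
  have "{k - 1..d} = insert (k - 1) {k..d}" using assms by auto
  then have "gpoly A k = ?c (k - 1) * hcomp k 0 + (\<Sum>j\<in>{k..d}. ?c j * hcomp k (Suc (j - k)))"
    using assms by (simp add: gpoly_def size_A Suc_diff_le)
  then have "gpoly A k - perm_poly ?s (gpoly A k) =
      (\<Sum>j\<in>{k..d}. ?c j * (hcomp k (Suc (j - k)) - perm_poly ?s (hcomp k (Suc (j - k)))))"
    by (simp add: perm_poly_add perm_poly_sum perm_poly_mconst_mult hcomp_0 right_diff_distrib sum_subtractf)
  also have "\<dots> = (\<Sum>j\<in>{k..d}. ?c j * ((mvar k - mvar (Suc k)) * hcomp (Suc k) (j - k)))"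
    by (simp add: hcomp_minus_swap[OF assms(1)])
  also have "\<dots> = (mvar k - mvar (Suc k)) * gpoly A (Suc k)"
    by (simp add: gpoly_def size_A sum_distrib_left mult_ac)
  finally show ?thesis .
qed

end

section \<open>Divided differences\<close>

text \<open>On monomials \<open>\<partial>\<^sub>k\<close> is the explicit quotient: with \<open>c = min a b\<close> and \<open>m = |a - b|\<close>,
  \<open>\<partial>\<^sub>k (x\<^sup>u x\<^sub>k\<^sup>a x\<^sub>k\<^sub>+\<^sub>1\<^sup>b) = \<plusminus> x\<^sup>u (x\<^sub>k x\<^sub>k\<^sub>+\<^sub>1)\<^sup>c \<Sum>\<^sub>i\<^sub><\<^sub>m x\<^sub>k\<^sup>i x\<^sub>k\<^sub>+\<^sub>1\<^sup>m\<^sup>-\<^sup>1\<^sup>-\<^sup>i\<close>.\<close>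

definition divdiff_mon :: "nat \<Rightarrow> (nat \<Rightarrow>\<^sub>0 nat) \<Rightarrow> 'a::comm_ring_1 mpoly" where
  "divdiff_mon k t = (let a = Poly_Mapping.lookup t k; b = Poly_Mapping.lookup t (Suc k);
      u = Poly_Mapping.update k 0 (Poly_Mapping.update (Suc k) 0 t); c = min a b; m = max a b - c in
     (if b \<le> a then 1 else -1) *
       (\<Sum>i<m. mmonom (u + Poly_Mapping.single k (c + i) + Poly_Mapping.single (Suc k) (c + (m - Suc i)))))"

definition divdiff :: "nat \<Rightarrow> 'a::comm_ring_1 mpoly \<Rightarrow> 'a mpoly" where
  "divdiff k = lin_ext (divdiff_mon k)"

lemma mvar_minus_mvar_mult_sum:
  "(mvar k - mvar l) * (\<Sum>i<m. mmonom (u + Poly_Mapping.single k (c + i) + Poly_Mapping.single l (c + (m - Suc i))))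
     = mmonom u * (mvar k * mvar l) ^ c * (mvar k ^ m - mvar l ^ m :: 'a::comm_ring_1 mpoly)"
proof -
  have split: "mmonom (u + Poly_Mapping.single k e1 + Poly_Mapping.single l e2) =
      mmonom u * mvar k ^ e1 * (mvar l ^ e2 :: 'a mpoly)" for e1 e2
    by (simp add: mmonom_add mvar_power)
  have "(\<Sum>i<m. mmonom (u + Poly_Mapping.single k (c + i) + Poly_Mapping.single l (c + (m - Suc i))))
      = mmonom u * (mvar k * mvar l) ^ c * (\<Sum>i<m. mvar l ^ (m - Suc i) * (mvar k ^ i :: 'a mpoly))"
    unfolding split power_add by (simp add: sum_distrib_left power_mult_distrib mult_ac)
  then show ?thesis
    by (simp add: power_diff_sumr2 mult_ac)
qed

lemma mmonom_split_adj:
  fixes k :: nat and t :: "nat \<Rightarrow>\<^sub>0 nat"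
  defines "u \<equiv> Poly_Mapping.update k 0 (Poly_Mapping.update (Suc k) 0 t)"
  shows "mmonom t = mmonom u * mvar k ^ Poly_Mapping.lookup t k *
      (mvar (Suc k) ^ Poly_Mapping.lookup t (Suc k) :: 'a::comm_ring_1 mpoly)"
    and "mmonom (perm_mon (adj_transp k) t) = mmonom u * mvar k ^ Poly_Mapping.lookup t (Suc k) *
      (mvar (Suc k) ^ Poly_Mapping.lookup t k :: 'a mpoly)"
proof -
  have split: "mmonom (u + Poly_Mapping.single k a + Poly_Mapping.single (Suc k) b) =
      mmonom u * mvar k ^ a * (mvar (Suc k) ^ b :: 'a mpoly)" for a b
    by (simp only: mmonom_add mvar_power)
  have "t = u + Poly_Mapping.single k (Poly_Mapping.lookup t k) +
      Poly_Mapping.single (Suc k) (Poly_Mapping.lookup t (Suc k))"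
    by (rule poly_mapping_eqI) (simp add: u_def lookup_add lookup_update lookup_single when_def)
  from split[of "Poly_Mapping.lookup t k" "Poly_Mapping.lookup t (Suc k)", folded this]
  show "mmonom t = mmonom u * mvar k ^ Poly_Mapping.lookup t k *
      (mvar (Suc k) ^ Poly_Mapping.lookup t (Suc k) :: 'a mpoly)" .
  have "perm_mon (adj_transp k) t = u + Poly_Mapping.single k (Poly_Mapping.lookup t (Suc k)) +
      Poly_Mapping.single (Suc k) (Poly_Mapping.lookup t k)"
    by (rule poly_mapping_eqI)
      (simp add: u_def lookup_perm_mon lookup_add lookup_update lookup_single when_def transpose_def)
  from split[of "Poly_Mapping.lookup t (Suc k)" "Poly_Mapping.lookup t k", folded this]
  show "mmonom (perm_mon (adj_transp k) t) = mmonom u * mvar k ^ Poly_Mapping.lookup t (Suc k) *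
      (mvar (Suc k) ^ Poly_Mapping.lookup t k :: 'a mpoly)" .
qed

lemma mult_divdiff_mon:
  "(mvar k - mvar (Suc k)) * divdiff_mon k t = mmonom t - (mmonom (perm_mon (adj_transp k) t) :: 'a::comm_ring_1 mpoly)"
proof -
  define a where "a = Poly_Mapping.lookup t k"
  define b where "b = Poly_Mapping.lookup t (Suc k)"
  define u where "u = Poly_Mapping.update k 0 (Poly_Mapping.update (Suc k) 0 t)"
  define c where "c = min a b"
  define m where "m = max a b - c"
  let ?X = "mvar k :: 'a mpoly" and ?Y = "mvar (Suc k) :: 'a mpoly"
  let ?S = "\<Sum>i<m. mmonom (u + Poly_Mapping.single k (c + i) + Poly_Mapping.single (Suc k) (c + (m - Suc i))) :: 'a mpoly"
  note t = mmonom_split_adj(1)[where k = k and t = t, folded u_def a_def b_def]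
    and st = mmonom_split_adj(2)[where k = k and t = t, folded u_def a_def b_def]
  have "divdiff_mon k t = (if b \<le> a then 1 else -1) * ?S"
    unfolding divdiff_mon_def Let_def a_def b_def u_def c_def m_def by simp
  then have "(?X - ?Y) * divdiff_mon k t = (if b \<le> a then 1 else -1) * ((?X - ?Y) * ?S)"
    by (simp only: mult.left_commute)
  also have "\<dots> = (if b \<le> a then 1 else -1) * (mmonom u * (?X * ?Y) ^ c * (?X ^ m - ?Y ^ m))"
    by (simp only: mvar_minus_mvar_mult_sum)
  finally have quotient: "(?X - ?Y) * divdiff_mon k t =
      (if b \<le> a then 1 else -1) * (mmonom u * (?X * ?Y) ^ c * (?X ^ m - ?Y ^ m))" .
  show ?thesis
  proof (cases "b \<le> a")
    case True
    then have "a = c + m" "b = c" by (auto simp: c_def m_def)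
    then have "mmonom u * (?X * ?Y) ^ c * (?X ^ m - ?Y ^ m) = mmonom t - mmonom (perm_mon (adj_transp k) t)"
      unfolding t st by (simp add: power_add power_mult_distrib algebra_simps)
    with True quotient show ?thesis by simp
  next
    case False
    then have "b = c + m" "a = c" by (auto simp: c_def m_def)
    then have "mmonom u * (?X * ?Y) ^ c * (?X ^ m - ?Y ^ m) = mmonom (perm_mon (adj_transp k) t) - mmonom t"
      unfolding t st by (simp add: power_add power_mult_distrib algebra_simps)
    with False quotient show ?thesis by simp
  qed
qed

lemma mult_divdiff:
  "(mvar k - mvar (Suc k)) * divdiff k p = p - perm_poly (adj_transp k) (p :: 'a::comm_ring_1 mpoly)"
proof -
  have "(mvar k - mvar (Suc k)) * divdiff k p = lin_ext (\<lambda>t. (mvar k - mvar (Suc k)) * divdiff_mon k t) p"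
    by (simp add: divdiff_def lin_ext_fun_mult_left)
  also have "\<dots> = lin_ext (\<lambda>t. mmonom t - mmonom (perm_mon (adj_transp k) t)) p"
    by (simp add: mult_divdiff_mon)
  also have "\<dots> = p - perm_poly (adj_transp k) p"
    by (simp add: lin_ext_fun_diff perm_poly_eq_lin_ext)
  finally show ?thesis .
qed

lemma divdiff_diff: "divdiff k (p - q) = divdiff k p - divdiff k q"
  by (simp add: divdiff_def lin_ext_diff)

lemma divdiff_sum: "divdiff k (\<Sum>i\<in>I. f i) = (\<Sum>i\<in>I. divdiff k (f i))"
  by (simp add: divdiff_def lin_ext_sum)

lemma mvar_minus_mvar_Suc_nonzero: "mvar k - mvar (Suc k) \<noteq> (0 :: 'a::comm_ring_1 mpoly)"
proof
  assume "mvar k - mvar (Suc k) = (0 :: 'a mpoly)"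
  then have "Poly_Mapping.lookup (mvar k :: 'a mpoly) (Poly_Mapping.single k 1) =
      Poly_Mapping.lookup (mvar (Suc k) :: 'a mpoly) (Poly_Mapping.single k 1)"
    by simp
  moreover have "Poly_Mapping.single (Suc k) (1::nat) \<noteq> Poly_Mapping.single k 1"
    by (metis lookup_single_eq lookup_single_not_eq n_not_Suc_n zero_neq_one)
  ultimately show False
    by (simp add: mvar_def lookup_single)
qed

lemma mult_mvar_minus_mvar_Suc_cancel:
  "(mvar k - mvar (Suc k)) * p = (mvar k - mvar (Suc k)) * q \<Longrightarrow> p = (q :: 'a::idom mpoly)"
  using mult_left_cancel[OF mvar_minus_mvar_Suc_nonzero[of k]] by blast

lemma divdiff_eq_0_if_fixed: "perm_poly (adj_transp k) p = p \<Longrightarrow> divdiff k p = (0 :: 'a::idom mpoly)"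
  using mult_divdiff[of k p] mult_mvar_minus_mvar_Suc_cancel[of k "divdiff k p" 0] by simp

lemma divdiff_mult:
  "divdiff k (q * g) = divdiff k q * g + perm_poly (adj_transp k) q * divdiff k (g :: 'a::idom mpoly)"
proof (rule mult_mvar_minus_mvar_Suc_cancel[of k])
  let ?D = "mvar k - mvar (Suc k) :: 'a mpoly" and ?s = "adj_transp k"
  have "?D * (divdiff k q * g + perm_poly ?s q * divdiff k g) =
      (?D * divdiff k q) * g + perm_poly ?s q * (?D * divdiff k g)"
    by (simp add: algebra_simps)
  also have "\<dots> = (q - perm_poly ?s q) * g + perm_poly ?s q * (g - perm_poly ?s g)"
    by (simp only: mult_divdiff)
  also have "\<dots> = q * g - perm_poly ?s (q * g)"
    by (simp add: perm_poly_mult algebra_simps)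
  also have "\<dots> = ?D * divdiff k (q * g)"
    by (simp only: mult_divdiff)
  finally show "?D * divdiff k (q * g) = ?D * (divdiff k q * g + perm_poly ?s q * divdiff k g)" ..
qed

lemma keys_divdiff_mon:
  assumes "s \<in> Poly_Mapping.keys (divdiff_mon k t :: 'a::comm_ring_1 mpoly)"
  shows "\<forall>j. j \<noteq> k \<and> j \<noteq> Suc k \<longrightarrow> Poly_Mapping.lookup s j = Poly_Mapping.lookup t j"
    and "Poly_Mapping.lookup s k < max (Poly_Mapping.lookup t k) (Poly_Mapping.lookup t (Suc k))"
    and "Poly_Mapping.lookup s (Suc k) < max (Poly_Mapping.lookup t k) (Poly_Mapping.lookup t (Suc k))"
proof -
  define a where "a = Poly_Mapping.lookup t k"
  define b where "b = Poly_Mapping.lookup t (Suc k)"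
  define u where "u = Poly_Mapping.update k 0 (Poly_Mapping.update (Suc k) 0 t)"
  define c where "c = min a b"
  define m where "m = max a b - c"
  let ?S = "\<Sum>i<m. mmonom (u + Poly_Mapping.single k (c + i) + Poly_Mapping.single (Suc k) (c + (m - Suc i))) :: 'a mpoly"
  have "divdiff_mon k t = (if b \<le> a then 1 else -1) * ?S"
    unfolding divdiff_mon_def Let_def a_def b_def u_def c_def m_def by simp
  then have "Poly_Mapping.keys (divdiff_mon k t :: 'a mpoly) \<subseteq> Poly_Mapping.keys ?S"
    by auto
  also have "\<dots> \<subseteq> (\<Union>i<m. {u + Poly_Mapping.single k (c + i) + Poly_Mapping.single (Suc k) (c + (m - Suc i))})"
    by (rule order.trans[OF keys_sum]) auto
  finally obtain i where "i < m"
    "s = u + Poly_Mapping.single k (c + i) + Poly_Mapping.single (Suc k) (c + (m - Suc i))"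
    using assms by blast
  moreover have "c + m = max a b" by (simp add: c_def m_def)
  ultimately show "\<forall>j. j \<noteq> k \<and> j \<noteq> Suc k \<longrightarrow> Poly_Mapping.lookup s j = Poly_Mapping.lookup t j"
    and "Poly_Mapping.lookup s k < max a b" and "Poly_Mapping.lookup s (Suc k) < max a b"
    by (auto simp: lookup_add lookup_single u_def lookup_update a_def b_def)
qed

lemma keys_divdiff:
  assumes "s \<in> Poly_Mapping.keys (divdiff k p :: 'a::comm_ring_1 mpoly)"
  obtains t where "t \<in> Poly_Mapping.keys p" "s \<in> Poly_Mapping.keys (divdiff_mon k t :: 'a mpoly)"
  using assms keys_lin_ext[of "divdiff_mon k" p] unfolding divdiff_def by blast

lemma in_KX_divdiff:
  assumes "in_KX n p" "1 \<le> k" "Suc k \<le> n"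
  shows "in_KX n (divdiff k (p :: 'a::comm_ring_1 mpoly))"
  unfolding in_KX_def
proof (intro ballI subsetI)
  fix s j assume s: "s \<in> Poly_Mapping.keys (divdiff k p)" and j: "j \<in> Poly_Mapping.keys s"
  obtain t where t: "t \<in> Poly_Mapping.keys p" "s \<in> Poly_Mapping.keys (divdiff_mon k t :: 'a mpoly)"
    using s by (rule keys_divdiff)
  show "j \<in> {1..n}"
  proof (cases "j = k \<or> j = Suc k")
    case False
    then have "j \<in> Poly_Mapping.keys t"
      using keys_divdiff_mon(1)[OF t(2)] j by (auto simp: in_keys_iff)
    then show ?thesis using assms(1) t(1) unfolding in_KX_def by blast
  qed (use assms in auto)
qed

definition reduced :: "nat \<Rightarrow> nat \<Rightarrow> 'a::zero mpoly \<Rightarrow> bool" where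
  "reduced n d p \<longleftrightarrow> in_KX n p \<and> (\<forall>t\<in>Poly_Mapping.keys p. \<forall>i\<in>{1..n}. Poly_Mapping.lookup t i \<le> d - i)"

lemma reduced_diff:
  assumes "reduced n d p" "reduced n d q"
  shows "reduced n d (p - q :: 'a::comm_ring_1 mpoly)"
  using assms keys_diff[of p q] in_KX_diff[of n p q] unfolding reduced_def by blast

lemma reduced_divdiff:
  assumes "reduced n d p" "1 \<le> k" "Suc k \<le> n"
  shows "reduced n d (divdiff k (p :: 'a::comm_ring_1 mpoly))"
  unfolding reduced_def
proof (intro conjI ballI)
  show "in_KX n (divdiff k p)" using assms in_KX_divdiff unfolding reduced_def by blast
  fix s i assume s: "s \<in> Poly_Mapping.keys (divdiff k p)" and i: "i \<in> {1..n}"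
  obtain t where t: "t \<in> Poly_Mapping.keys p" "s \<in> Poly_Mapping.keys (divdiff_mon k t :: 'a mpoly)"
    using s by (rule keys_divdiff)
  have bound: "j \<in> {1..n} \<Longrightarrow> Poly_Mapping.lookup t j \<le> d - j" for j
    using assms(1) t(1) by (auto simp: reduced_def)
  then have "max (Poly_Mapping.lookup t k) (Poly_Mapping.lookup t (Suc k)) \<le> d - k"
    using assms by fastforce
  then show "Poly_Mapping.lookup s i \<le> d - i"
    using keys_divdiff_mon[OF t(2)] bound[OF i] by (cases "i = k \<or> i = Suc k") auto
qed

section \<open>Division by one generator\<close>

lemma mmonom_split_var:
  "mmonom t = mmonom (Poly_Mapping.update i 0 t) * (mvar i ^ Poly_Mapping.lookup t i :: 'a::comm_ring_1 mpoly)"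
proof -
  have "t = Poly_Mapping.update i 0 t + Poly_Mapping.single i (Poly_Mapping.lookup t i)"
    by (rule poly_mapping_eqI) (simp add: lookup_add lookup_update lookup_single when_def)
  then show ?thesis by (metis mmonom_add mvar_power)
qed

lemma update_zero_add:
  "Poly_Mapping.lookup s i = 0 \<Longrightarrow> Poly_Mapping.update i 0 (t + s) = Poly_Mapping.update i 0 t + s"
  by (rule poly_mapping_eqI) (auto simp: lookup_add lookup_update)

definition coeff_var :: "nat \<Rightarrow> nat \<Rightarrow> 'a::comm_ring_1 mpoly \<Rightarrow> 'a mpoly" where
  "coeff_var i b = lin_ext (\<lambda>t. if Poly_Mapping.lookup t i = b then mmonom (Poly_Mapping.update i 0 t) else 0)"

lemma sum_coeff_var:
  assumes "\<And>t. t \<in> Poly_Mapping.keys p \<Longrightarrow> Poly_Mapping.lookup t i \<le> B"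
  shows "(\<Sum>b\<le>B. mvar i ^ b * coeff_var i b p) = (p :: 'a::comm_ring_1 mpoly)"
proof -
  have "(\<Sum>b\<le>B. mvar i ^ b * coeff_var i b p) = lin_ext (\<lambda>t. \<Sum>b\<le>B. mvar i ^ b *
      (if Poly_Mapping.lookup t i = b then mmonom (Poly_Mapping.update i 0 t) else 0)) p"
    by (simp add: coeff_var_def lin_ext_def sum_distrib_left mult_ac sum.swap[of _ "{..B}"])
  also have "\<dots> = lin_ext mmonom p"
  proof (rule lin_ext_cong)
    fix t assume "t \<in> Poly_Mapping.keys p"
    then have "(\<Sum>b\<le>B. mvar i ^ b * (if Poly_Mapping.lookup t i = b then mmonom (Poly_Mapping.update i 0 t) else (0 :: 'a mpoly)))
        = mvar i ^ Poly_Mapping.lookup t i * mmonom (Poly_Mapping.update i 0 t)"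
      using assms by (simp add: if_distrib[of "\<lambda>x. _ * x"] sum.delta' cong: if_cong)
    then show "(\<Sum>b\<le>B. mvar i ^ b * (if Poly_Mapping.lookup t i = b then mmonom (Poly_Mapping.update i 0 t) else (0 :: 'a mpoly)))
        = mmonom t"
      by (simp add: mmonom_split_var[of t i] mult.commute)
  qed
  finally show ?thesis by simp
qed

lemma coeff_var_add: "coeff_var i b (p + q) = coeff_var i b p + coeff_var i b q"
  by (simp add: coeff_var_def lin_ext_add)

lemma coeff_var_mmonom:
  "coeff_var i b (mmonom t) = (if Poly_Mapping.lookup t i = b then mmonom (Poly_Mapping.update i 0 t) else 0)"
  by (simp add: coeff_var_def)

lemma coeff_var_eq_0:
  assumes "\<And>t. t \<in> Poly_Mapping.keys p \<Longrightarrow> Poly_Mapping.lookup t i \<noteq> b"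
  shows "coeff_var i b p = 0"
  unfolding coeff_var_def by (subst lin_ext_cong[of p _ "\<lambda>t. 0"]) (auto simp: assms lin_ext_def)

lemma keys_coeff_var:
  assumes "s \<in> Poly_Mapping.keys (coeff_var i b p)"
  shows "\<exists>t\<in>Poly_Mapping.keys p. s = Poly_Mapping.update i 0 t"
  using assms keys_lin_ext unfolding coeff_var_def by (fastforce split: if_splits)

lemma sum_atMost_eq_lessThan_plus:
  fixes f :: "nat \<Rightarrow> 'a::comm_monoid_add"
  shows "(\<Sum>b\<le>D. f b) = (\<Sum>b<D. f b) + f D"
  using sum.lessThan_Suc[of f D] by (simp add: lessThan_Suc_atMost)

text \<open>As a polynomial in \<open>x\<^sub>i\<close>, \<open>g\<^sub>i = x\<^sub>i\<^sup>D + \<Sum>\<^sub>b\<^sub><\<^sub>D c\<^sub>b x\<^sub>i\<^sup>b\<close> is monic of degree \<open>D = d - i + 1\<close>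
  with coefficients \<open>c\<^sub>b\<close> in \<open>x\<^sub>1, \<dots>, x\<^sub>i\<^sub>-\<^sub>1\<close>. \<open>var_pow_rem A i a\<close> is the remainder of \<open>x\<^sub>i\<^sup>a\<close> on
  division by \<open>g\<^sub>i\<close>, computed from \<open>x\<^sub>i\<^sup>D \<equiv> - \<Sum>\<^sub>b\<^sub><\<^sub>D c\<^sub>b x\<^sub>i\<^sup>b\<close>.\<close>

function var_pow_rem :: "'a::field multiset \<Rightarrow> nat \<Rightarrow> nat \<Rightarrow> 'a mpoly" where
  "var_pow_rem A i a = (if a < size A - i + 1 then mvar i ^ a else
     - (\<Sum>b<size A - i + 1. coeff_var i b (gpoly A i) * var_pow_rem A i (a - (size A - i + 1) + b)))"
  by auto
termination by (relation "measure (\<lambda>(A, i, a). a)") auto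

declare var_pow_rem.simps [simp del]

definition reduce_var :: "'a::field multiset \<Rightarrow> nat \<Rightarrow> 'a mpoly \<Rightarrow> 'a mpoly" where
  "reduce_var A i =
     lin_ext (\<lambda>t. mmonom (Poly_Mapping.update i 0 t) * var_pow_rem A i (Poly_Mapping.lookup t i))"

lemma reduce_var_zero [simp]: "reduce_var A i 0 = 0"
  by (simp add: reduce_var_def)

lemma reduce_var_add: "reduce_var A i (p + q) = reduce_var A i p + reduce_var A i q"
  by (simp add: reduce_var_def lin_ext_add)

lemma reduce_var_sum: "reduce_var A i (\<Sum>j\<in>J. f j) = (\<Sum>j\<in>J. reduce_var A i (f j))"
  by (simp add: reduce_var_def lin_ext_sum)

lemma reduce_var_mult_right:
  assumes "\<And>s. s \<in> Poly_Mapping.keys c \<Longrightarrow> Poly_Mapping.lookup s i = 0"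
  shows "reduce_var A i (p * c) = reduce_var A i p * c"
  unfolding reduce_var_def
  by (rule lin_ext_mult_right) (simp add: assms update_zero_add lookup_add mmonom_add mult_ac)

lemma reduce_var_mvar_power_mult:
  assumes "\<And>s. s \<in> Poly_Mapping.keys q \<Longrightarrow> Poly_Mapping.lookup s i = 0"
  shows "reduce_var A i (mvar i ^ a * q) = var_pow_rem A i a * q"
proof -
  have "Poly_Mapping.update i 0 (Poly_Mapping.single i a) = 0"
    by (rule poly_mapping_eqI) (simp add: lookup_update lookup_single)
  then have "reduce_var A i (mvar i ^ a) = var_pow_rem A i a"
    by (simp add: mvar_power reduce_var_def mmonom_zero)
  then show ?thesis
    by (simp add: reduce_var_mult_right[OF assms])
qed

context
  fixes A :: "'a::field multiset" and d :: nat
  assumes size_A: "size A = d"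
begin

lemma coeff_var_gpoly_lead:
  assumes "1 \<le> i" "i \<le> d"
  shows "coeff_var i (d - i + 1) (gpoly A i) = 1"
proof -
  have "coeff_var i (d - i + 1) (gpoly A i - mmonom (Poly_Mapping.single i (d - i + 1))) = 0"
    by (rule coeff_var_eq_0) (use keys_gpoly_minus_lead[OF size_A assms] in \<open>auto simp: monoms_below_def\<close>)
  moreover have "Poly_Mapping.update i 0 (Poly_Mapping.single i (d - i + 1)) = 0"
    by (rule poly_mapping_eqI) (simp add: lookup_update lookup_single)
  ultimately show ?thesis
    using coeff_var_add[of i "d - i + 1" "mmonom (Poly_Mapping.single i (d - i + 1))"
        "gpoly A i - mmonom (Poly_Mapping.single i (d - i + 1))"]
    by (simp add: coeff_var_mmonom mmonom_zero)
qed

lemma gpoly_eq_sum_atMost_coeff_var: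
  assumes "1 \<le> i" "i \<le> d"
  shows "gpoly A i = (\<Sum>b\<le>d - i + 1. mvar i ^ b * coeff_var i b (gpoly A i))"
  using keys_gpoly[OF size_A assms] by (intro sum_coeff_var[symmetric]) (fastforce simp: monoms_below_def)

lemma gpoly_eq_sum_coeff_var:
  assumes "1 \<le> i" "i \<le> d"
  shows "gpoly A i = mvar i ^ (d - i + 1) + (\<Sum>b<d - i + 1. mvar i ^ b * coeff_var i b (gpoly A i))"
  by (subst gpoly_eq_sum_atMost_coeff_var[OF assms])
    (simp only: sum_atMost_eq_lessThan_plus coeff_var_gpoly_lead[OF assms] mult_1_right,
      rule add.commute)

lemma keys_coeff_var_gpoly:
  assumes "1 \<le> i" "i \<le> d" "s \<in> Poly_Mapping.keys (coeff_var i b (gpoly A i))"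
  shows "Poly_Mapping.keys s \<subseteq> {1..i}" and "Poly_Mapping.lookup s i = 0"
proof -
  obtain t where "t \<in> Poly_Mapping.keys (gpoly A i)" "s = Poly_Mapping.update i 0 t"
    using keys_coeff_var[OF assms(3)] by blast
  with in_KX_gpoly[OF size_A assms(1,2)]
  show "Poly_Mapping.keys s \<subseteq> {1..i}" and "Poly_Mapping.lookup s i = 0"
    by (auto simp: keys_update lookup_update in_KX_def)
qed

lemma in_KX_coeff_var_gpoly:
  assumes "1 \<le> i" "i \<le> d" "i \<le> n"
  shows "in_KX n (coeff_var i b (gpoly A i))"
  using keys_coeff_var_gpoly(1)[OF assms(1,2)] assms(3) unfolding in_KX_def by fastforce

lemma var_pow_rem_less: "a < d - i + 1 \<Longrightarrow> var_pow_rem A i a = mvar i ^ a"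
  by (simp add: var_pow_rem.simps size_A)

lemma var_pow_rem_add:
  "var_pow_rem A i (e + (d - i + 1)) = - (\<Sum>b<d - i + 1. coeff_var i b (gpoly A i) * var_pow_rem A i (e + b))"
  by (subst var_pow_rem.simps) (simp add: size_A)

lemma sum_coeff_var_gpoly_var_pow_rem:
  assumes "1 \<le> i" "i \<le> d"
  shows "(\<Sum>b\<le>d - i + 1. coeff_var i b (gpoly A i) * var_pow_rem A i (e + b)) = 0"
  by (simp only: sum_atMost_eq_lessThan_plus coeff_var_gpoly_lead[OF assms] var_pow_rem_add
      mult_1_left add.right_inverse)

lemma keys_var_pow_rem:
  assumes "1 \<le> i" "i \<le> d"
  shows "Poly_Mapping.keys (var_pow_rem A i a) \<subseteq> monoms_below i (d - i + 1)"
proof (induction a rule: less_induct)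
  case (less a)
  show ?case
  proof (cases "a < d - i + 1")
    case True
    then show ?thesis using assms by (simp add: var_pow_rem_less mvar_power monoms_below_def)
  next
    case False
    then obtain e where e: "a = e + (d - i + 1)" by (metis add.commute le_add_diff_inverse not_less)
    have "Poly_Mapping.keys (coeff_var i b (gpoly A i) * var_pow_rem A i (e + b)) \<subseteq> monoms_below i (d - i + 1)"
      if "b < d - i + 1" for b
    proof
      fix u assume "u \<in> Poly_Mapping.keys (coeff_var i b (gpoly A i) * var_pow_rem A i (e + b))"
      then obtain s r where "s \<in> Poly_Mapping.keys (coeff_var i b (gpoly A i))"
        "r \<in> Poly_Mapping.keys (var_pow_rem A i (e + b))" "u = s + r"
        using keys_mult by blast
      moreover from this(2) have "r \<in> monoms_below i (d - i + 1)"
        using less[of "e + b"] e that by auto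
      ultimately show "u \<in> monoms_below i (d - i + 1)"
        using keys_coeff_var_gpoly[OF assms] by (auto simp: monoms_below_def keys_add_monom lookup_add)
    qed
    then show ?thesis unfolding e var_pow_rem_add keys_minus
      by (intro order.trans[OF keys_sum] UN_least) auto
  qed
qed

lemma mvar_power_minus_var_pow_rem_in_gen_ideal:
  assumes "1 \<le> i" "i \<le> d" "i \<le> n"
  shows "mvar i ^ a - var_pow_rem A i a \<in> gen_ideal n (gpoly A)"
proof (induction a rule: less_induct)
  case (less a)
  show ?case
  proof (cases "a < d - i + 1")
    case True
    then show ?thesis by (simp add: var_pow_rem_less gen_ideal_zero)
  next
    case False
    then obtain e where e: "a = e + (d - i + 1)" by (metis add.commute le_add_diff_inverse not_less)
    let ?c = "\<lambda>b. coeff_var i b (gpoly A i)"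
    have "mvar i ^ a - var_pow_rem A i a = mvar i ^ e * (mvar i ^ (d - i + 1) + (\<Sum>b<d - i + 1. mvar i ^ b * ?c b))
        - (\<Sum>b<d - i + 1. ?c b * (mvar i ^ (e + b) - var_pow_rem A i (e + b)))"
      unfolding e var_pow_rem_add by (simp add: algebra_simps sum_distrib_left sum_subtractf power_add)
    also have "\<dots> = mvar i ^ e * gpoly A i - (\<Sum>b<d - i + 1. ?c b * (mvar i ^ (e + b) - var_pow_rem A i (e + b)))"
      using gpoly_eq_sum_coeff_var[OF assms(1,2)] by simp
    also have "\<dots> \<in> gen_ideal n (gpoly A)"
    proof (rule gen_ideal_diff)
      show "mvar i ^ e * gpoly A i \<in> gen_ideal n (gpoly A)"
        using assms by (intro mult_gen_in_gen_ideal in_KX_power in_KX_mvar) auto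
      show "(\<Sum>b<d - i + 1. ?c b * (mvar i ^ (e + b) - var_pow_rem A i (e + b))) \<in> gen_ideal n (gpoly A)"
        using assms less e by (intro gen_ideal_sum gen_ideal_mult in_KX_coeff_var_gpoly) auto
    qed
    finally show ?thesis .
  qed
qed

lemma reduce_var_mult_gpoly:
  assumes "1 \<le> i" "i \<le> d"
  shows "reduce_var A i (q * gpoly A i) = 0"
proof -
  let ?c = "\<lambda>b. coeff_var i b (gpoly A i)"
  have "reduce_var A i (mmonom t * gpoly A i) = 0" for t
  proof -
    let ?u = "mmonom (Poly_Mapping.update i 0 t) :: 'a mpoly" and ?a = "Poly_Mapping.lookup t i"
    have split: "mmonom t * gpoly A i = (\<Sum>b\<le>d - i + 1. mvar i ^ (?a + b) * (?u * ?c b))"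
      by (subst gpoly_eq_sum_atMost_coeff_var[OF assms], subst mmonom_split_var[of t i],
          simp only: sum_distrib_left) (rule sum.cong[OF refl], simp add: power_add mult_ac)
    have "Poly_Mapping.lookup s i = 0" if "s \<in> Poly_Mapping.keys (?u * ?c b)" for s b
      using that keys_mult[of ?u "?c b"] keys_coeff_var_gpoly(2)[OF assms]
      by (auto simp: lookup_add lookup_update)
    then have "reduce_var A i (mmonom t * gpoly A i) = (\<Sum>b\<le>d - i + 1. var_pow_rem A i (?a + b) * (?u * ?c b))"
      unfolding split reduce_var_sum by (intro sum.cong refl reduce_var_mvar_power_mult)
    also have "\<dots> = ?u * (\<Sum>b\<le>d - i + 1. ?c b * var_pow_rem A i (?a + b))"
      unfolding sum_distrib_left by (rule sum.cong[OF refl]) (simp add: mult_ac)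
    finally show ?thesis by (simp only: sum_coeff_var_gpoly_var_pow_rem[OF assms] mult_zero_right)
  qed
  moreover have "q * gpoly A i = lin_ext (\<lambda>t. mmonom t * gpoly A i) q"
    by (simp add: lin_ext_fun_mult_right)
  then have "reduce_var A i (q * gpoly A i) = lin_ext (\<lambda>t. reduce_var A i (mmonom t * gpoly A i)) q"
    by (simp only: reduce_var_def lin_ext_comp)
  ultimately show ?thesis
    by (simp add: lin_ext_def)
qed

lemma reduce_var_mult_gpoly_less:
  assumes "1 \<le> j" "j \<le> d" "j < i"
  shows "reduce_var A i (q * gpoly A j) = reduce_var A i q * gpoly A j"
proof (rule reduce_var_mult_right)
  fix s assume "s \<in> Poly_Mapping.keys (gpoly A j)"
  then have "Poly_Mapping.keys s \<subseteq> {1..j}"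
    using in_KX_gpoly[OF size_A assms(1,2)] by (simp add: in_KX_def)
  then show "Poly_Mapping.lookup s i = 0"
    by (rule lookup_eq_zero_outside_keys) (use assms(3) in auto)
qed

lemma keys_reduce_var:
  assumes "1 \<le> i" "i \<le> d" "s \<in> Poly_Mapping.keys (reduce_var A i p)"
  obtains t r where "t \<in> Poly_Mapping.keys p" "r \<in> monoms_below i (d - i + 1)"
    "s = Poly_Mapping.update i 0 t + r"
proof -
  obtain t where "t \<in> Poly_Mapping.keys p"
    "s \<in> Poly_Mapping.keys (mmonom (Poly_Mapping.update i 0 t) * var_pow_rem A i (Poly_Mapping.lookup t i))"
    using assms(3) keys_lin_ext unfolding reduce_var_def by blast
  with that show ?thesis
    using keys_mult keys_var_pow_rem[OF assms(1,2)] by fastforce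
qed

lemma in_KX_reduce_var:
  assumes "1 \<le> i" "i \<le> d" "i \<le> n" "in_KX n p"
  shows "in_KX n (reduce_var A i p)"
  unfolding in_KX_def
proof
  fix s assume "s \<in> Poly_Mapping.keys (reduce_var A i p)"
  then obtain t r where "t \<in> Poly_Mapping.keys p" "r \<in> monoms_below i (d - i + 1)"
    "s = Poly_Mapping.update i 0 t + r"
    using keys_reduce_var[OF assms(1,2)] by blast
  then show "Poly_Mapping.keys s \<subseteq> {1..n}"
    using assms(3,4) by (auto simp: in_KX_def monoms_below_def keys_add_monom keys_update)
qed

lemma minus_reduce_var_in_gen_ideal:
  assumes "1 \<le> i" "i \<le> d" "i \<le> n" "in_KX n p"
  shows "p - reduce_var A i p \<in> gen_ideal n (gpoly A)"
proof -
  have "p - reduce_var A i p = lin_ext mmonom p - reduce_var A i p"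
    by simp
  also have "\<dots> = lin_ext (\<lambda>t. mmonom (Poly_Mapping.update i 0 t) *
      (mvar i ^ Poly_Mapping.lookup t i - var_pow_rem A i (Poly_Mapping.lookup t i))) p"
    unfolding reduce_var_def lin_ext_fun_diff[symmetric]
    by (simp add: right_diff_distrib mmonom_split_var[symmetric])
  also have "\<dots> \<in> gen_ideal n (gpoly A)"
    unfolding lin_ext_def using assms
    by (intro gen_ideal_sum gen_ideal_mult in_KX_mconst in_KX_single
        mvar_power_minus_var_pow_rem_in_gen_ideal) (auto simp: in_KX_def keys_update)
  finally show ?thesis .
qed

lemma reduce_var_eq_self:
  assumes "\<And>t. t \<in> Poly_Mapping.keys p \<Longrightarrow> Poly_Mapping.lookup t i < d - i + 1"
  shows "reduce_var A i p = p"
proof -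
  have "reduce_var A i p = lin_ext mmonom p"
    unfolding reduce_var_def
  proof (rule lin_ext_cong)
    fix t assume "t \<in> Poly_Mapping.keys p"
    then have "var_pow_rem A i (Poly_Mapping.lookup t i) = mvar i ^ Poly_Mapping.lookup t i"
      by (intro var_pow_rem_less assms)
    then show "mmonom (Poly_Mapping.update i 0 t) * var_pow_rem A i (Poly_Mapping.lookup t i) = mmonom t"
      by (simp add: mmonom_split_var[of t i])
  qed
  then show ?thesis by simp
qed

end

section \<open>The normal form\<close>

primrec reduce :: "'a::field multiset \<Rightarrow> nat \<Rightarrow> 'a mpoly \<Rightarrow> 'a mpoly" where
  "reduce A 0 p = p"
| "reduce A (Suc j) p = reduce A j (reduce_var A (Suc j) p)"

lemma reduce_zero [simp]: "reduce A j 0 = 0"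
  by (induction j) simp_all

lemma reduce_add: "reduce A j (p + q) = reduce A j p + reduce A j q"
  by (induction j arbitrary: p q) (simp_all add: reduce_var_add)

lemma reduce_sum: "reduce A j (\<Sum>i\<in>I. f i) = (\<Sum>i\<in>I. reduce A j (f i))"
  by (induction I rule: infinite_finite_induct) (simp_all add: reduce_add)

lemma mon_lex_less_asym: "mon_lex_less s t \<Longrightarrow> \<not> mon_lex_less t s"
  unfolding mon_lex_less_def by (metis linorder_neqE_nat not_less_iff_gr_or_eq)

lemma mon_dvd_single_iff: "mon_dvd (Poly_Mapping.single i a) t \<longleftrightarrow> a \<le> Poly_Mapping.lookup t i"
  unfolding mon_dvd_def by (metis le0 lookup_single_eq lookup_single_not_eq)

context
  fixes A :: "'a::field multiset" and d :: nat
  assumes size_A: "size A = d"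
begin

lemma minus_reduce_in_gen_ideal:
  assumes "j \<le> n" "j \<le> d" "in_KX n p"
  shows "p - reduce A j p \<in> gen_ideal n (gpoly A)"
  using assms
proof (induction j arbitrary: p)
  case 0
  then show ?case by (simp add: gen_ideal_zero)
next
  case (Suc j)
  let ?p = "reduce_var A (Suc j) p"
  have "p - ?p \<in> gen_ideal n (gpoly A)"
    using Suc.prems by (intro minus_reduce_var_in_gen_ideal[OF size_A]) auto
  moreover have "?p - reduce A j ?p \<in> gen_ideal n (gpoly A)"
    using Suc by (intro Suc.IH in_KX_reduce_var[OF size_A]) auto
  ultimately show ?case
    using gen_ideal_add by fastforce
qed

text \<open>Reducing \<open>x\<^sub>i\<close> only changes the exponents of \<open>x\<^sub>1, \<dots>, x\<^sub>i\<close>, so the bounds already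
  established for \<open>x\<^sub>i\<^sub>+\<^sub>1, \<dots>, x\<^sub>n\<close> survive the later steps.\<close>

lemma reduced_reduce:
  assumes "j \<le> n" "j \<le> d" "in_KX n p"
    and "\<And>t l. t \<in> Poly_Mapping.keys p \<Longrightarrow> l \<in> {Suc j..n} \<Longrightarrow> Poly_Mapping.lookup t l \<le> d - l"
  shows "reduced n d (reduce A j p)"
  using assms
proof (induction j arbitrary: p)
  case 0
  then show ?case by (simp add: reduced_def)
next
  case (Suc j)
  let ?p = "reduce_var A (Suc j) p"
  have "Poly_Mapping.lookup s l \<le> d - l" if s: "s \<in> Poly_Mapping.keys ?p" and l: "l \<in> {Suc j..n}" for s l
  proof -
    obtain t r where tr: "t \<in> Poly_Mapping.keys p" "r \<in> monoms_below (Suc j) (d - Suc j + 1)"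
      "s = Poly_Mapping.update (Suc j) 0 t + r"
      using keys_reduce_var[OF size_A _ _ s] Suc.prems by auto
    show ?thesis
    proof (cases "l = Suc j")
      case True
      then show ?thesis using tr by (auto simp: lookup_add lookup_update monoms_below_def)
    next
      case False
      then have "Poly_Mapping.lookup r l = 0"
        using tr(2) l by (intro lookup_eq_zero_outside_keys[of r "{1..Suc j}"]) (auto simp: monoms_below_def)
      then show ?thesis using tr(3) Suc.prems(4)[OF tr(1)] l False by (simp add: lookup_add lookup_update)
    qed
  qed
  then show ?case using Suc by (simp add: in_KX_reduce_var[OF size_A])
qed

lemma reduce_eq_self:
  assumes "reduced n d p" "j \<le> n"
  shows "reduce A j p = p"
  using assms(2)
proof (induction j)
  case (Suc j)
  have "Poly_Mapping.lookup t (Suc j) \<le> d - Suc j" if "t \<in> Poly_Mapping.keys p" for t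
    using assms(1) that Suc.prems unfolding reduced_def by auto
  then have "reduce_var A (Suc j) p = p"
    by (intro reduce_var_eq_self[OF size_A]) (simp add: less_Suc_eq_le)
  then show ?case using Suc by simp
qed simp

lemma reduce_mult_gpoly:
  assumes "1 \<le> i" "i \<le> j" "j \<le> d"
  shows "reduce A j (q * gpoly A i) = 0"
  using assms
proof (induction j arbitrary: q)
  case (Suc j)
  show ?case
  proof (cases "i = Suc j")
    case True
    then show ?thesis using Suc.prems by (simp add: reduce_var_mult_gpoly[OF size_A])
  next
    case False
    then have "reduce_var A (Suc j) (q * gpoly A i) = reduce_var A (Suc j) q * gpoly A i"
      using Suc.prems by (intro reduce_var_mult_gpoly_less[OF size_A]) auto
    then show ?thesis using Suc False by simp
  qed
qed simp

lemma reduced_in_gen_ideal_eq_0: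
  assumes "n \<le> d" "reduced n d r" "r \<in> gen_ideal n (gpoly A)"
  shows "r = 0"
proof -
  obtain q where q: "r = (\<Sum>i = 1..n. q i * gpoly A i)"
    using assms(3) unfolding gen_ideal_def by blast
  have "r = reduce A n r" using reduce_eq_self[OF assms(2)] by simp
  also have "\<dots> = (\<Sum>i = 1..n. reduce A n (q i * gpoly A i))" unfolding q by (rule reduce_sum)
  also have "\<dots> = 0" using assms(1) by (intro sum.neutral) (auto intro: reduce_mult_gpoly)
  finally show ?thesis .
qed

lemma lead_mon_gpoly:
  assumes "1 \<le> i" "i \<le> d"
  shows "lead_mon (gpoly A i) = Poly_Mapping.single i (d - i + 1)"
  unfolding lead_mon_def
proof (rule the_equality)
  let ?m = "Poly_Mapping.single i (d - i + 1)"
  have lead: "?m \<in> Poly_Mapping.keys (gpoly A i)"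
    using lookup_gpoly_lead[OF size_A assms] by (simp add: in_keys_iff)
  have less: "mon_lex_less s ?m" if "s \<in> Poly_Mapping.keys (gpoly A i)" "s \<noteq> ?m" for s
  proof -
    have "s \<in> monoms_below i (d - i + 1)" using keys_gpoly[OF size_A assms] that by blast
    then have "Poly_Mapping.keys s \<subseteq> {1..i}" "Poly_Mapping.lookup s i < d - i + 1"
      by (auto simp: monoms_below_def)
    moreover from this(1) have "Poly_Mapping.lookup s j = 0" if "j > i" for j
      using that by (intro lookup_eq_zero_outside_keys[of s "{1..i}"]) auto
    ultimately show ?thesis unfolding mon_lex_less_def by (intro exI[of _ i]) (simp add: lookup_single)
  qed
  with lead show "?m \<in> Poly_Mapping.keys (gpoly A i) \<and>
      (\<forall>s\<in>Poly_Mapping.keys (gpoly A i). s \<noteq> ?m \<longrightarrow> mon_lex_less s ?m)"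
    by blast
  fix t assume t: "t \<in> Poly_Mapping.keys (gpoly A i) \<and>
      (\<forall>s\<in>Poly_Mapping.keys (gpoly A i). s \<noteq> t \<longrightarrow> mon_lex_less s t)"
  show "t = ?m"
  proof (rule ccontr)
    assume "t \<noteq> ?m"
    with t lead less have "mon_lex_less ?m t" "mon_lex_less t ?m" by auto
    then show False using mon_lex_less_asym by blast
  qed
qed

lemma normal_form_gpoly_eq_reduce:
  assumes "n \<le> d" "in_KX n h"
  shows "normal_form n (gpoly A) h = reduce A n h"
proof -
  have "\<not> mon_dvd (lead_mon (gpoly A i)) t \<longleftrightarrow> Poly_Mapping.lookup t i \<le> d - i" if "i \<in> {1..n}" for i t
    using that assms(1) by (simp add: lead_mon_gpoly mon_dvd_single_iff not_less_eq_eq)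
  then have "(\<forall>t\<in>Poly_Mapping.keys r. \<forall>i\<in>{1..n}. \<not> mon_dvd (lead_mon (gpoly A i)) t) \<longleftrightarrow>
      (\<forall>t\<in>Poly_Mapping.keys r. \<forall>i\<in>{1..n}. Poly_Mapping.lookup t i \<le> d - i)" for r :: "'a mpoly"
    by blast
  then have normal_form_iff: "(in_KX n r \<and> h - r \<in> gen_ideal n (gpoly A) \<and>
      (\<forall>t\<in>Poly_Mapping.keys r. \<forall>i\<in>{1..n}. \<not> mon_dvd (lead_mon (gpoly A i)) t)) \<longleftrightarrow>
      reduced n d r \<and> h - r \<in> gen_ideal n (gpoly A)" for r
    unfolding reduced_def by blast
  have reduce: "reduced n d (reduce A n h)" "h - reduce A n h \<in> gen_ideal n (gpoly A)"
    using assms by (auto intro: reduced_reduce minus_reduce_in_gen_ideal)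
  show ?thesis
    unfolding normal_form_def normal_form_iff
  proof (rule the_equality)
    fix r assume r: "reduced n d r \<and> h - r \<in> gen_ideal n (gpoly A)"
    then have "(h - reduce A n h) - (h - r) \<in> gen_ideal n (gpoly A)"
      by (intro gen_ideal_diff[OF reduce(2)]) simp
    then have "r - reduce A n h \<in> gen_ideal n (gpoly A)"
      by simp
    with r reduce show "r = reduce A n h"
      using reduced_in_gen_ideal_eq_0[OF assms(1) reduced_diff] by fastforce
  qed (use reduce in blast)
qed

lemma reduced_normal_form_gpoly:
  assumes "n \<le> d" "in_KX n h"
  shows "reduced n d (normal_form n (gpoly A) h)"
  unfolding normal_form_gpoly_eq_reduce[OF assms] by (rule reduced_reduce[OF order_refl assms]) auto

lemma minus_normal_form_gpoly_in_gen_ideal: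
  assumes "n \<le> d" "in_KX n h"
  shows "h - normal_form n (gpoly A) h \<in> gen_ideal n (gpoly A)"
  using assms by (simp add: normal_form_gpoly_eq_reduce minus_reduce_in_gen_ideal)

section \<open>Invariance under permutations of the variables\<close>

lemma divdiff_gpoly_self:
  assumes "1 \<le> k" "k < d"
  shows "divdiff k (gpoly A k) = gpoly A (Suc k)"
  by (rule mult_mvar_minus_mvar_Suc_cancel[of k]) (simp only: mult_divdiff gpoly_minus_swap[OF size_A assms])

lemma perm_poly_adj_transp_gpoly:
  assumes "1 \<le> i" "i \<le> d" "1 \<le> k" "i \<noteq> k"
  shows "perm_poly (adj_transp k) (gpoly A i) = gpoly A i"
proof (cases "i < k")
  case True
  then show ?thesis by (intro perm_poly_gpoly_fix[OF size_A assms(1,2)]) auto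
next
  case False
  then have "adj_transp k permutes {1..i}" using assms by (intro permutes_swap_id) auto
  then show ?thesis by (rule perm_poly_gpoly)
qed

lemma divdiff_gen_ideal:
  assumes "n \<le> d" "1 \<le> k" "Suc k \<le> n" "p \<in> gen_ideal n (gpoly A)"
  shows "divdiff k p \<in> gen_ideal n (gpoly A)"
proof -
  obtain q where q: "\<forall>i\<in>{1..n}. in_KX n (q i)" "p = (\<Sum>i = 1..n. q i * gpoly A i)"
    using assms(4) unfolding gen_ideal_def by blast
  have "divdiff k (q i * gpoly A i) \<in> gen_ideal n (gpoly A)" if i: "i \<in> {1..n}" for i
  proof -
    have "divdiff k (q i) * gpoly A i \<in> gen_ideal n (gpoly A)"
      using i q(1) assms by (intro mult_gen_in_gen_ideal in_KX_divdiff) auto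
    moreover have "perm_poly (adj_transp k) (q i) * divdiff k (gpoly A i) \<in> gen_ideal n (gpoly A)"
    proof (cases "i = k")
      case True
      then show ?thesis
        using i q(1) assms
        by (simp add: divdiff_gpoly_self) (intro mult_gen_in_gen_ideal in_KX_perm_poly permutes_swap_id; simp)
    next
      case False
      then show ?thesis
        using i assms by (simp add: divdiff_eq_0_if_fixed perm_poly_adj_transp_gpoly gen_ideal_zero)
    qed
    ultimately show ?thesis
      by (simp add: divdiff_mult gen_ideal_add)
  qed
  then show ?thesis
    unfolding q(2) divdiff_sum by (rule gen_ideal_sum)
qed

lemma perm_poly_adj_transp_gen_ideal:
  assumes "n \<le> d" "1 \<le> k" "Suc k \<le> n" "p \<in> gen_ideal n (gpoly A)"
  shows "perm_poly (adj_transp k) p \<in> gen_ideal n (gpoly A)"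
proof -
  have "perm_poly (adj_transp k) p = p - (mvar k - mvar (Suc k)) * divdiff k p"
    by (simp add: mult_divdiff)
  also have "\<dots> \<in> gen_ideal n (gpoly A)"
    using assms by (intro gen_ideal_diff gen_ideal_mult divdiff_gen_ideal in_KX_diff in_KX_mvar) auto
  finally show ?thesis .
qed

lemma perm_poly_gen_ideal:
  assumes "n \<le> d" "\<sigma> permutes {1..n}" "p \<in> gen_ideal n (gpoly A)"
  shows "perm_poly \<sigma> p \<in> gen_ideal n (gpoly A)"
proof -
  let ?P = "\<lambda>\<sigma>. bij \<sigma> \<and> (\<forall>p\<in>gen_ideal n (gpoly A). perm_poly \<sigma> p \<in> gen_ideal n (gpoly A))"
  have "?P \<sigma>"
    using assms(2)
  proof (rule permutes_induct_adj_transp)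
    show "?P id" by simp
    show "?P (\<sigma> \<circ> \<tau>)" if "?P \<sigma>" "?P \<tau>" for \<sigma> \<tau>
      using that by (simp add: bij_comp perm_poly_comp[symmetric])
    show "?P (adj_transp k)" if "1 \<le> k" "Suc k \<le> n" for k
      using that perm_poly_adj_transp_gen_ideal[OF assms(1)] by simp
  qed
  with assms(3) show ?thesis by blast
qed

lemma perm_poly_adj_transp_normal_form:
  assumes "n \<le> d" "1 \<le> k" "Suc k \<le> n" "in_KX n h" "symmetric_poly n h"
  shows "perm_poly (adj_transp k) (normal_form n (gpoly A) h) = normal_form n (gpoly A) h"
proof -
  let ?r = "normal_form n (gpoly A) h"
  have r: "reduced n d ?r" "h - ?r \<in> gen_ideal n (gpoly A)"
    using assms(1,4) by (rule reduced_normal_form_gpoly, rule minus_normal_form_gpoly_in_gen_ideal)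
  have "perm_poly (adj_transp k) h = h"
    using assms(2,3,5) by (simp add: symmetric_poly_def permutes_swap_id)
  then have "divdiff k ?r = - divdiff k (h - ?r)"
    by (simp add: divdiff_diff divdiff_eq_0_if_fixed)
  also have "\<dots> \<in> gen_ideal n (gpoly A)"
    using assms r by (intro gen_ideal_uminus divdiff_gen_ideal) auto
  finally have "divdiff k ?r = 0"
    using assms(1-3) r(1) reduced_divdiff reduced_in_gen_ideal_eq_0 by blast
  then show ?thesis
    using mult_divdiff[of k ?r] by simp
qed

lemma symmetric_normal_form:
  assumes "n \<le> d" "in_KX n h" "symmetric_poly n h"
  shows "symmetric_poly n (normal_form n (gpoly A) h)"
  unfolding symmetric_poly_def
proof (intro allI impI)
  fix \<sigma> :: "nat \<Rightarrow> nat" assume "\<sigma> permutes {1..n}"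
  let ?r = "normal_form n (gpoly A) h"
  let ?P = "\<lambda>\<sigma>. bij \<sigma> \<and> perm_poly \<sigma> ?r = ?r"
  have "?P \<sigma>"
    using \<open>\<sigma> permutes {1..n}\<close>
  proof (rule permutes_induct_adj_transp)
    show "?P id" by simp
    show "?P (\<sigma> \<circ> \<tau>)" if "?P \<sigma>" "?P \<tau>" for \<sigma> \<tau>
      using that by (simp add: bij_comp perm_poly_comp[symmetric])
    show "?P (adj_transp k)" if "1 \<le> k" "Suc k \<le> n" for k
      using that perm_poly_adj_transp_normal_form assms by simp
  qed
  then show "perm_poly \<sigma> ?r = ?r" ..
qed

lemma normal_form_degree_le:
  assumes "1 \<le> n" "n \<le> d" "in_KX n h" "symmetric_poly n h"
    and "t \<in> Poly_Mapping.keys (normal_form n (gpoly A) h)" "i \<in> {1..n}"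
  shows "Poly_Mapping.lookup t i \<le> d - n"
proof -
  let ?r = "normal_form n (gpoly A) h" and ?s = "transpose i n"
  have s: "?s permutes {1..n}" using assms(1,6) by (intro permutes_swap_id) auto
  then have "Poly_Mapping.lookup ?r (perm_mon ?s t) = Poly_Mapping.lookup (perm_poly ?s ?r) (perm_mon ?s t)"
    using symmetric_normal_form[OF assms(2-4)] by (simp add: symmetric_poly_def)
  also have "\<dots> = Poly_Mapping.lookup ?r t"
    using s by (simp add: lookup_perm_poly_perm_mon permutes_bij)
  finally have "perm_mon ?s t \<in> Poly_Mapping.keys ?r"
    using assms(5) by (simp add: in_keys_iff)
  moreover have "reduced n d ?r"
    using assms(2,3) by (rule reduced_normal_form_gpoly)
  ultimately have "Poly_Mapping.lookup (perm_mon ?s t) n \<le> d - n"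
    using assms(1) unfolding reduced_def by auto
  then show ?thesis
    using s by (simp add: lookup_perm_mon permutes_bij)
qed

end

theorem proposition2p2:
  fixes A :: "'a::field multiset" and n d :: nat
  assumes "1 \<le> n" and "n \<le> d" and "size A = d"
  shows "(\<forall>p \<sigma>. p \<in> gen_ideal n (gpoly A) \<and> \<sigma> permutes {1..n}
            \<longrightarrow> perm_poly \<sigma> p \<in> gen_ideal n (gpoly A))
       \<and> (\<forall>h. in_KX n h \<and> symmetric_poly n h \<longrightarrow>
            symmetric_poly n (normal_form n (gpoly A) h)
            \<and> (\<forall>t\<in>Poly_Mapping.keys (normal_form n (gpoly A) h). \<forall>i\<in>{1..n}. Poly_Mapping.lookup t i \<le> d - n))"
  using perm_poly_gen_ideal[OF assms(3,2)] symmetric_normal_form[OF assms(3,2)]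
    normal_form_degree_le[OF assms(3,1,2)]
  by blast

end
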